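(* Consider the sub-$\ell^\infty$ structure on $\mathbb{R}^2$ defined by $X_1=\partial_x$, $X_2=x\partial_y$. A regular bang-bang trajectory with more than $3$ arcs is not a time-minimizer. If, moreover, a regular bang-bang trajectory $\gamma$ starts on the $y$-axis (i.e. $\gamma(0)\in\{x=0\}$) and is a time-minimizer, then it has at most $2$ arcs.
   Context: Sub-$\ell^\infty$ structure defined by smooth vector fields $X_1,\dots,X_k$ on a manifold $M$: an admissible trajectory is an absolutely continuous curve $\gamma:[0,T]\to M$ together with a measurable control $u=(u_1,\dots,u_k):[0,T]\to\mathbb{R}^k$ with $|u_i(t)|\le1$ for all $i$ and a.e. $t$, such that $\dot\gamma(t)=\sum_i u_i(t)X_i(\gamma(t))$ for a.e. $t$. It is a time-minimizer (optimal) if no admissible trajectory joins $\gamma(0)$ to $\gamma(T)$ in time less than $T$. An extremal pair is a pair $(\lambda,\gamma)$ where $\gamma$ is admissible with control $u$ and $\lambda:[0,T]\to T^*M$ is absolutely continuous with $\lambda(t)\in T^*_{\gamma(t)}M\setminus\{0\}$, such that, with $\mathcal H(\lambda,p,u)=\sum_i u_i\langle\lambda,X_i(p)\rangle$, in canonical coordinates $\dot\lambda=-\partial_p\mathcal H(\lambda,\gamma,u)$, $\dot\gamma=\partial_\lambda\mathcal H(\lambda,\gamma,u)$ a.e., and there is a constant $\lambda_0\ge0$ with $\sum_iu_i(t)\langle\lambda(t),X_i(\gamma(t))\rangle=\sum_i|\langle\lambda(t),X_i(\gamma(t))\rangle|=\lambda_0$ for a.e. $t$; $\gamma$ is then an extremal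 trajectory and $\lambda$ an extremal lift. The switching functions are $\varphi_j(t)=\langle\lambda(t),X_j(\gamma(t))\rangle$. The restriction of an extremal pair to an open interval $I$ is a regular arc if $\varphi_j(t)\ne0$ for all $t\in I$ and all $j$; arcs are taken maximal (not contained in a strictly larger open interval with the same property). A regular bang-bang trajectory is an extremal trajectory with an extremal lift such that $[0,T]$ minus finitely many points is a finite union of maximal regular arcs (on each of which the control is then constant with values in $\{1,-1\}^k$); these are its arcs. *)

theory Defs
  imports "HOL-Analysis.Analysis"
begin

text \<open>Points of the plane are pairs (x,y); cotangent vectors are pairs (lx,ly) of
 components in the dual basis dx, dy, paired with tangent vectors by the inner product.\<close>

definition abs_cont_on :: "real set \<Rightarrow> (real \<Rightarrow> 'a::real_normed_vector) \<Rightarrow> bool" where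
  "abs_cont_on S f \<longleftrightarrow>
     (\<forall>e>0. \<exists>d>0. \<forall>n::nat. \<forall>a b. (\<forall>i<n. a i \<in> S \<and> b i \<in> S \<and> a i \<le> b i) \<and>
        disjoint_family_on (\<lambda>i. {a i<..<b i}) {..<n} \<and> (\<Sum>i<n. b i - a i) < d
        \<longrightarrow> (\<Sum>i<n. norm (f (b i) - f (a i))) < e)"

definition X1 :: "real \<times> real \<Rightarrow> real \<times> real" where "X1 p = (1, 0)"
definition X2 :: "real \<times> real \<Rightarrow> real \<times> real" where "X2 p = (0, fst p)"

definition Xf :: "nat \<Rightarrow> real \<times> real \<Rightarrow> real \<times> real" where
  "Xf j = (if j = 1 then X1 else X2)"

definition admissible :: "real \<Rightarrow> (real \<Rightarrow> real \<times> real) \<Rightarrow> (real \<Rightarrow> real \<times> real) \<Rightarrow> bool" where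
  "admissible T \<gamma> u \<longleftrightarrow> 0 \<le> T \<and> abs_cont_on {0..T} \<gamma> \<and> u measurable_on {0..T} \<and>
     (AE t in lebesgue. t \<in> {0..T} \<longrightarrow> \<bar>fst (u t)\<bar> \<le> 1 \<and> \<bar>snd (u t)\<bar> \<le> 1) \<and>
     (AE t in lebesgue. t \<in> {0..T} \<longrightarrow>
        (\<gamma> has_vector_derivative (fst (u t) *\<^sub>R X1 (\<gamma> t) + snd (u t) *\<^sub>R X2 (\<gamma> t))) (at t within {0..T}))"

definition time_minimizer :: "real \<Rightarrow> (real \<Rightarrow> real \<times> real) \<Rightarrow> bool" where
  "time_minimizer T \<gamma> \<longleftrightarrow> \<not> (\<exists>T' \<gamma>' u'. T' < T \<and> admissible T' \<gamma>' u' \<and>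
        \<gamma>' 0 = \<gamma> 0 \<and> \<gamma>' T' = \<gamma> T)"

text \<open>Control Hamiltonian H(l,p,u) = u1 <l,X1 p> + u2 <l,X2 p> = u1 lx + u2 x ly.
 Its partial derivatives: d_p H = (u2 ly, 0), d_l H = u1 X1 p + u2 X2 p.\<close>
definition Ham :: "real \<times> real \<Rightarrow> real \<times> real \<Rightarrow> real \<times> real \<Rightarrow> real" where
  "Ham l p u = fst u * (l \<bullet> X1 p) + snd u * (l \<bullet> X2 p)"

definition extremal_pair ::
  "real \<Rightarrow> (real \<Rightarrow> real \<times> real) \<Rightarrow> (real \<Rightarrow> real \<times> real) \<Rightarrow> (real \<Rightarrow> real \<times> real) \<Rightarrow> bool" where
  "extremal_pair T lam \<gamma> u \<longleftrightarrow> admissible T \<gamma> u \<and> abs_cont_on {0..T} lam \<and>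
     (\<forall>t\<in>{0..T}. lam t \<noteq> 0) \<and>
     (AE t in lebesgue. t \<in> {0..T} \<longrightarrow>
        (lam has_vector_derivative (- (snd (u t) * snd (lam t)), 0)) (at t within {0..T}) \<and>
        (\<gamma> has_vector_derivative (fst (u t) *\<^sub>R X1 (\<gamma> t) + snd (u t) *\<^sub>R X2 (\<gamma> t))) (at t within {0..T})) \<and>
     (\<exists>lam0\<ge>0. AE t in lebesgue. t \<in> {0..T} \<longrightarrow>
        Ham (lam t) (\<gamma> t) (u t) = \<bar>lam t \<bullet> X1 (\<gamma> t)\<bar> + \<bar>lam t \<bullet> X2 (\<gamma> t)\<bar> \<and>
        \<bar>lam t \<bullet> X1 (\<gamma> t)\<bar> + \<bar>lam t \<bullet> X2 (\<gamma> t)\<bar> = lam0)"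

definition switching :: "(real \<Rightarrow> real \<times> real) \<Rightarrow> (real \<Rightarrow> real \<times> real) \<Rightarrow> nat \<Rightarrow> real \<Rightarrow> real" where
  "switching lam \<gamma> j t = lam t \<bullet> Xf j (\<gamma> t)"

definition regular_interval ::
  "real \<Rightarrow> (real \<Rightarrow> real \<times> real) \<Rightarrow> (real \<Rightarrow> real \<times> real) \<Rightarrow> real \<times> real \<Rightarrow> bool" where
  "regular_interval T lam \<gamma> I \<longleftrightarrow> 0 \<le> fst I \<and> fst I < snd I \<and> snd I \<le> T \<and>
     (\<forall>t\<in>{fst I<..<snd I}. \<forall>j\<in>{1,2}. switching lam \<gamma> j t \<noteq> 0)"

definition arcs ::
  "real \<Rightarrow> (real \<Rightarrow> real \<times> real) \<Rightarrow> (real \<Rightarrow> real \<times> real) \<Rightarrow> (real \<times> real) set" where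
  "arcs T lam \<gamma> = {I. regular_interval T lam \<gamma> I \<and>
      (\<forall>J. regular_interval T lam \<gamma> J \<and> {fst I<..<snd I} \<subseteq> {fst J<..<snd J} \<longrightarrow> J = I)}"

definition regular_bang_bang_lift ::
  "real \<Rightarrow> (real \<Rightarrow> real \<times> real) \<Rightarrow> (real \<Rightarrow> real \<times> real) \<Rightarrow> (real \<Rightarrow> real \<times> real) \<Rightarrow> bool" where
  "regular_bang_bang_lift T lam \<gamma> u \<longleftrightarrow> extremal_pair T lam \<gamma> u \<and> finite (arcs T lam \<gamma>) \<and>
     (\<exists>F. finite F \<and> {0..T} - F = (\<Union>I\<in>arcs T lam \<gamma>. {fst I<..<snd I}))"

end

theory Submission
  imports Defs
begin

text \<open>
  The Hamiltonian \<open>u\<^sub>1 \<lambda>\<^sub>x + u\<^sub>2 x \<lambda>\<^sub>y\<close> does not depend on \<open>y\<close>, so \<open>\<lambda>\<^sub>y\<close> is a constant and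
  \<open>\<bar>\<lambda>\<^sub>x\<bar> + \<bar>\<lambda>\<^sub>y x\<bar> = K\<close> along an extremal. On a regular arc the maximum condition forces
  \<open>u\<^sub>1 = sgn \<lambda>\<^sub>x\<close> and \<open>u\<^sub>2 = sgn (\<lambda>\<^sub>y x)\<close>: \<open>x\<close> moves with unit speed, \<open>\<lambda>\<^sub>x\<close> is affine with slope
  \<open>-\<bar>\<lambda>\<^sub>y\<bar> sgn x\<close> and \<open>y\<close> changes by \<open>sgn \<lambda>\<^sub>y\<close> times the area under \<open>\<bar>x\<bar>\<close>. Hence an arc joining two
  switchings (zeros of \<open>\<lambda>\<^sub>x\<close> or of \<open>x\<close>) lasts exactly \<open>K / \<bar>\<lambda>\<^sub>y\<bar>\<close>, and the positions at the switchings
  are determined up to a sign.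

  Given three switchings after time \<open>0\<close>, or two when \<open>\<gamma>\<close> starts on the \<open>y\<close>-axis, the piece of \<open>\<gamma>\<close>
  up to the third switching is replaced by a path with \<open>u\<^sub>2 = sgn \<lambda>\<^sub>y sgn x\<close> that runs straight in \<open>x\<close>,
  turns once and reaches the same point strictly earlier (the comparison is an inequality between
  square roots); followed by the rest of \<open>\<gamma>\<close> it beats \<open>\<gamma>\<close>. Every maximal arc ends at \<open>T\<close> or at a
  switching, so more than three arcs (or three arcs from the axis) provide enough switchings.
\<close>

section \<open>Absolutely continuous functions of a real variable\<close>

lemma abs_cont_onD:
  assumes "abs_cont_on S f" "e > 0"
  obtains d where "d > 0" "\<And>n::nat. \<And>a b. \<forall>i<n. a i \<in> S \<and> b i \<in> S \<and> a i \<le> b i \<Longrightarrow>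
        disjoint_family_on (\<lambda>i. {a i<..<b i}) {..<n} \<Longrightarrow> (\<Sum>i<n. b i - a i) < d
        \<Longrightarrow> (\<Sum>i<n. norm (f (b i) - f (a i))) < e"
proof -
  have "\<exists>d>0. \<forall>n::nat. \<forall>a b. (\<forall>i<n. a i \<in> S \<and> b i \<in> S \<and> a i \<le> b i) \<and>
        disjoint_family_on (\<lambda>i. {a i<..<b i}) {..<n} \<and> (\<Sum>i<n. b i - a i) < d
        \<longrightarrow> (\<Sum>i<n. norm (f (b i) - f (a i))) < e"
    using assms unfolding abs_cont_on_def by simp
  then obtain d where "d > 0" and H: "\<forall>n::nat. \<forall>a b. (\<forall>i<n. a i \<in> S \<and> b i \<in> S \<and> a i \<le> b i) \<and>
        disjoint_family_on (\<lambda>i. {a i<..<b i}) {..<n} \<and> (\<Sum>i<n. b i - a i) < d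
        \<longrightarrow> (\<Sum>i<n. norm (f (b i) - f (a i))) < e" by blast
  show thesis by (rule that[OF \<open>d > 0\<close>]) (use H in blast)
qed

lemma abs_cont_onI:
  assumes "\<And>e. e > 0 \<Longrightarrow> \<exists>d>0. \<forall>n::nat. \<forall>a b. (\<forall>i<n. a i \<in> S \<and> b i \<in> S \<and> a i \<le> b i) \<longrightarrow>
        disjoint_family_on (\<lambda>i. {a i<..<b i}) {..<n} \<longrightarrow> (\<Sum>i<n. b i - a i) < d
        \<longrightarrow> (\<Sum>i<n. norm (f (b i) - f (a i))) < e"
  shows "abs_cont_on S f"
  unfolding abs_cont_on_def
proof (intro allI impI)
  fix e :: real assume "e > 0"
  from assms[OF this] obtain d where "d>0" and H: "\<forall>n::nat. \<forall>a b. (\<forall>i<n. a i \<in> S \<and> b i \<in> S \<and> a i \<le> b i) \<longrightarrow>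
        disjoint_family_on (\<lambda>i. {a i<..<b i}) {..<n} \<longrightarrow> (\<Sum>i<n. b i - a i) < d
        \<longrightarrow> (\<Sum>i<n. norm (f (b i) - f (a i))) < e" by blast
  show "\<exists>d>0. \<forall>n::nat. \<forall>a b. (\<forall>i<n. a i \<in> S \<and> b i \<in> S \<and> a i \<le> b i) \<and>
        disjoint_family_on (\<lambda>i. {a i<..<b i}) {..<n} \<and> (\<Sum>i<n. b i - a i) < d
        \<longrightarrow> (\<Sum>i<n. norm (f (b i) - f (a i))) < e"
    using \<open>d>0\<close> H by blast
qed

lemma abs_cont_on_subset: "abs_cont_on S f \<Longrightarrow> T \<subseteq> S \<Longrightarrow> abs_cont_on T f"
  unfolding abs_cont_on_def by (meson subsetD)

lemma abs_cont_on_cong: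
  assumes f: "abs_cont_on S f" and fg: "\<And>t. t \<in> S \<Longrightarrow> f t = g t"
  shows "abs_cont_on S g"
proof (rule abs_cont_onI)
  fix e :: real assume e: "e > 0"
  obtain d where d: "d > 0" and H: "\<And>n::nat. \<And>a b. \<forall>i<n. a i \<in> S \<and> b i \<in> S \<and> a i \<le> b i \<Longrightarrow>
      disjoint_family_on (\<lambda>i. {a i<..<b i}) {..<n} \<Longrightarrow> (\<Sum>i<n. b i - a i) < d
      \<Longrightarrow> (\<Sum>i<n. norm (f (b i) - f (a i))) < e"
    using abs_cont_onD[OF f e] by auto
  show "\<exists>d>0. \<forall>n::nat. \<forall>a b. (\<forall>i<n. a i \<in> S \<and> b i \<in> S \<and> a i \<le> b i) \<longrightarrow>
      disjoint_family_on (\<lambda>i. {a i<..<b i}) {..<n} \<longrightarrow> (\<Sum>i<n. b i - a i) < d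
      \<longrightarrow> (\<Sum>i<n. norm (g (b i) - g (a i))) < e"
  proof (intro exI[of _ d] conjI allI impI)
    fix n :: nat and a b assume ab: "\<forall>i<n. a i \<in> S \<and> b i \<in> S \<and> a i \<le> b i"
      and dj: "disjoint_family_on (\<lambda>i. {a i<..<b i}) {..<n}"
      and s: "(\<Sum>i<n. b i - a i) < d"
    have "(\<Sum>i<n. norm (g (b i) - g (a i))) = (\<Sum>i<n. norm (f (b i) - f (a i)))"
      by (rule sum.cong) (use ab fg in auto)
    then show "(\<Sum>i<n. norm (g (b i) - g (a i))) < e" using H[OF ab dj s] by simp
  qed (rule d)
qed

lemma abs_cont_on_imp_continuous_on:
  assumes "abs_cont_on {a..b} f"
  shows "continuous_on {a..b} f"
  unfolding continuous_on_iff
proof (intro ballI allI impI)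
  fix x e assume x: "x \<in> {a..b}" and e: "(0::real) < e"
  obtain d where d: "d > 0" and H: "\<And>n::nat. \<And>a' b'. \<forall>i<n. a' i \<in> {a..b} \<and> b' i \<in> {a..b} \<and> a' i \<le> b' i \<Longrightarrow>
        disjoint_family_on (\<lambda>i. {a' i<..<b' i}) {..<n} \<Longrightarrow> (\<Sum>i<n. b' i - a' i) < d
        \<Longrightarrow> (\<Sum>i<n. norm (f (b' i) - f (a' i))) < e"
    using abs_cont_onD[OF assms e] by blast
  show "\<exists>d>0. \<forall>x'\<in>{a..b}. dist x' x < d \<longrightarrow> dist (f x') (f x) < e"
  proof (intro exI[of _ d] conjI ballI impI)
    fix x' assume x': "x' \<in> {a..b}" and dx: "dist x' x < d"
    have "(\<Sum>i<1::nat. norm (f ((\<lambda>i. max x' x) i) - f ((\<lambda>i. min x' x) i))) < e"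
      by (rule H) (use x x' dx d in \<open>auto simp: disjoint_family_on_def dist_real_def\<close>)
    then show "dist (f x') (f x) < e"
      by (cases "x' \<le> x") (auto simp: dist_norm max_def min_def norm_minus_commute)
  qed (rule d)
qed

lemma lipschitz_imp_abs_cont_on:
  assumes "L-lipschitz_on S f"
  shows "abs_cont_on S f"
proof (rule abs_cont_onI)
  fix e :: real assume e: "e > 0"
  have L: "0 \<le> L" using assms by (rule lipschitz_on_nonneg)
  have lip: "norm (f t - f s) \<le> L * (t - s)" if "s \<in> S" "t \<in> S" "s \<le> t" for s t
    using lipschitz_onD[OF assms that(2,1)] that(3) by (simp add: dist_norm dist_real_def)
  show "\<exists>d>0. \<forall>n::nat. \<forall>a b. (\<forall>i<n. a i \<in> S \<and> b i \<in> S \<and> a i \<le> b i) \<longrightarrow>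
        disjoint_family_on (\<lambda>i. {a i<..<b i}) {..<n} \<longrightarrow> (\<Sum>i<n. b i - a i) < d
        \<longrightarrow> (\<Sum>i<n. norm (f (b i) - f (a i))) < e"
  proof (intro exI[of _ "e / (L + 1)"] conjI allI impI)
    show "e / (L + 1) > 0" using e L by simp
    fix n :: nat and a b assume ab: "\<forall>i<n. a i \<in> S \<and> b i \<in> S \<and> a i \<le> b i"
      and s: "(\<Sum>i<n. b i - a i) < e / (L + 1)"
    have "(\<Sum>i<n. norm (f (b i) - f (a i))) \<le> (\<Sum>i<n. L * (b i - a i))"
      by (rule sum_mono) (use ab lip in blast)
    also have "\<dots> = L * (\<Sum>i<n. b i - a i)" by (simp add: sum_distrib_left)
    also have "\<dots> \<le> L * (e / (L + 1))" using s L by (intro mult_left_mono) auto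
    also have "\<dots> < e" using e L by (simp add: field_simps)
    finally show "(\<Sum>i<n. norm (f (b i) - f (a i))) < e" .
  qed
qed

lemma abs_cont_on_diff:
  assumes f: "abs_cont_on S f" and g: "abs_cont_on S g"
  shows "abs_cont_on S (\<lambda>t. f t - g t)"
proof (rule abs_cont_onI)
  fix e :: real assume e: "e > 0"
  obtain d1 where d1: "d1 > 0" and H1: "\<And>n::nat. \<And>a b. \<forall>i<n. a i \<in> S \<and> b i \<in> S \<and> a i \<le> b i \<Longrightarrow>
        disjoint_family_on (\<lambda>i. {a i<..<b i}) {..<n} \<Longrightarrow> (\<Sum>i<n. b i - a i) < d1
        \<Longrightarrow> (\<Sum>i<n. norm (f (b i) - f (a i))) < e/2"
    using abs_cont_onD[OF f, of "e/2"] e by auto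
  obtain d2 where d2: "d2 > 0" and H2: "\<And>n::nat. \<And>a b. \<forall>i<n. a i \<in> S \<and> b i \<in> S \<and> a i \<le> b i \<Longrightarrow>
        disjoint_family_on (\<lambda>i. {a i<..<b i}) {..<n} \<Longrightarrow> (\<Sum>i<n. b i - a i) < d2
        \<Longrightarrow> (\<Sum>i<n. norm (g (b i) - g (a i))) < e/2"
    using abs_cont_onD[OF g, of "e/2"] e by auto
  show "\<exists>d>0. \<forall>n::nat. \<forall>a b. (\<forall>i<n. a i \<in> S \<and> b i \<in> S \<and> a i \<le> b i) \<longrightarrow>
        disjoint_family_on (\<lambda>i. {a i<..<b i}) {..<n} \<longrightarrow> (\<Sum>i<n. b i - a i) < d
        \<longrightarrow> (\<Sum>i<n. norm ((f (b i) - g (b i)) - (f (a i) - g (a i)))) < e"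
  proof (intro exI[of _ "min d1 d2"] conjI allI impI)
    show "min d1 d2 > 0" using d1 d2 by simp
    fix n :: nat and a b assume ab: "\<forall>i<n. a i \<in> S \<and> b i \<in> S \<and> a i \<le> b i"
      and dj: "disjoint_family_on (\<lambda>i. {a i<..<b i}) {..<n}"
      and s: "(\<Sum>i<n. b i - a i) < min d1 d2"
    have "(\<Sum>i<n. norm ((f (b i) - g (b i)) - (f (a i) - g (a i))))
        \<le> (\<Sum>i<n. norm (f (b i) - f (a i)) + norm (g (b i) - g (a i)))"
      by (rule sum_mono) (metis (no_types, lifting) diff_diff_eq diff_diff_eq2 norm_minus_commute
          norm_triangle_ineq4 add_diff_cancel)
    also have "\<dots> < e/2 + e/2"
      unfolding sum.distrib using H1[OF ab dj] H2[OF ab dj] s by (intro add_strict_mono) auto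
    finally show "(\<Sum>i<n. norm ((f (b i) - g (b i)) - (f (a i) - g (a i)))) < e" by simp
  qed
qed

lemma abs_cont_on_compose_nonexpansive:
  assumes f: "abs_cont_on S f" and h: "\<And>v w. norm (h v - h w) \<le> norm (v - w)"
  shows "abs_cont_on S (\<lambda>t. h (f t))"
proof (rule abs_cont_onI)
  fix e :: real assume e: "e > 0"
  obtain d where "d > 0" and H: "\<And>n::nat. \<And>a b. \<forall>i<n. a i \<in> S \<and> b i \<in> S \<and> a i \<le> b i \<Longrightarrow>
        disjoint_family_on (\<lambda>i. {a i<..<b i}) {..<n} \<Longrightarrow> (\<Sum>i<n. b i - a i) < d
        \<Longrightarrow> (\<Sum>i<n. norm (f (b i) - f (a i))) < e"
    using abs_cont_onD[OF f e] by blast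
  show "\<exists>d>0. \<forall>n::nat. \<forall>a b. (\<forall>i<n. a i \<in> S \<and> b i \<in> S \<and> a i \<le> b i) \<longrightarrow>
        disjoint_family_on (\<lambda>i. {a i<..<b i}) {..<n} \<longrightarrow> (\<Sum>i<n. b i - a i) < d
        \<longrightarrow> (\<Sum>i<n. norm (h (f (b i)) - h (f (a i)))) < e"
  proof (intro exI[of _ d] conjI allI impI)
    fix n :: nat and a b assume "\<forall>i<n. a i \<in> S \<and> b i \<in> S \<and> a i \<le> b i"
      "disjoint_family_on (\<lambda>i. {a i<..<b i}) {..<n}" "(\<Sum>i<n. b i - a i) < d"
    then have "(\<Sum>i<n. norm (f (b i) - f (a i))) < e" by (rule H)
    moreover have "(\<Sum>i<n. norm (h (f (b i)) - h (f (a i)))) \<le> (\<Sum>i<n. norm (f (b i) - f (a i)))"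
      by (rule sum_mono) (rule h)
    ultimately show "(\<Sum>i<n. norm (h (f (b i)) - h (f (a i)))) < e" by linarith
  qed fact
qed

lemma abs_cont_on_fst: "abs_cont_on S f \<Longrightarrow> abs_cont_on S (\<lambda>t. fst (f t))"
  by (erule abs_cont_on_compose_nonexpansive) (metis fst_diff norm_fst_le prod.collapse)

lemma abs_cont_on_snd: "abs_cont_on S f \<Longrightarrow> abs_cont_on S (\<lambda>t. snd (f t))"
  by (erule abs_cont_on_compose_nonexpansive) (metis snd_diff norm_snd_le prod.collapse)

lemma abs_cont_on_shift:
  assumes "abs_cont_on {a..b} f"
  shows "abs_cont_on {a-h..b-h} (\<lambda>t. f (t + h))"
proof (rule abs_cont_onI)
  fix e :: real assume e: "e > 0"
  obtain d where d: "d > 0" and H: "\<And>n::nat. \<And>a' b'. \<forall>i<n. a' i \<in> {a..b} \<and> b' i \<in> {a..b} \<and> a' i \<le> b' i \<Longrightarrow>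
        disjoint_family_on (\<lambda>i. {a' i<..<b' i}) {..<n} \<Longrightarrow> (\<Sum>i<n. b' i - a' i) < d
        \<Longrightarrow> (\<Sum>i<n. norm (f (b' i) - f (a' i))) < e"
    using abs_cont_onD[OF assms e] by auto
  show "\<exists>d>0. \<forall>n::nat. \<forall>a' b'. (\<forall>i<n. a' i \<in> {a-h..b-h} \<and> b' i \<in> {a-h..b-h} \<and> a' i \<le> b' i) \<longrightarrow>
        disjoint_family_on (\<lambda>i. {a' i<..<b' i}) {..<n} \<longrightarrow> (\<Sum>i<n. b' i - a' i) < d
        \<longrightarrow> (\<Sum>i<n. norm (f (b' i + h) - f (a' i + h))) < e"
  proof (intro exI[of _ d] conjI allI impI)
    fix n :: nat and a' b' assume ab: "\<forall>i<n. a' i \<in> {a-h..b-h} \<and> b' i \<in> {a-h..b-h} \<and> a' i \<le> b' i"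
      and dj: "disjoint_family_on (\<lambda>i. {a' i<..<b' i}) {..<n}"
      and s: "(\<Sum>i<n. b' i - a' i) < d"
    have "disjoint_family_on (\<lambda>i. {a' i + h<..<b' i + h}) {..<n}"
      unfolding disjoint_family_on_def
    proof (intro ballI impI equalityI subsetI)
      fix i j x assume ij: "i \<in> {..<n}" "j \<in> {..<n}" "i \<noteq> j"
        and "x \<in> {a' i + h<..<b' i + h} \<inter> {a' j + h<..<b' j + h}"
      then have "x - h \<in> {a' i<..<b' i} \<inter> {a' j<..<b' j}" by auto
      then show "x \<in> {}" using dj ij unfolding disjoint_family_on_def by blast
    qed simp
    moreover have "\<forall>i<n. a' i + h \<in> {a..b} \<and> b' i + h \<in> {a..b} \<and> a' i + h \<le> b' i + h"
      using ab by auto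
    ultimately show "(\<Sum>i<n. norm (f (b' i + h) - f (a' i + h))) < e"
      using H[of n "\<lambda>i. a' i + h" "\<lambda>i. b' i + h"] s by simp
  qed (rule d)
qed

lemma norm_diff_le_split_at:
  fixes f :: "real \<Rightarrow> 'a::real_normed_vector"
  assumes "s \<le> t"
  shows "norm (f t - f s) \<le> norm (f (min t m) - f (min s m)) + norm (f (max t m) - f (max s m))"
proof -
  consider "t \<le> m" | "m \<le> s" | "s < m" "m < t" by linarith
  then show ?thesis
  proof cases
    case 3
    have "norm (f t - f s) \<le> norm (f m - f s) + norm (f t - f m)"
      using norm_triangle_ineq[of "f m - f s" "f t - f m"] by simp
    with 3 show ?thesis by (simp add: min_def max_def)
  qed (use assms in \<open>simp_all add: min_def max_def\<close>)
qed

lemma abs_cont_on_join: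
  assumes f1: "abs_cont_on {a..m} f" and f2: "abs_cont_on {m..b} f" and am: "a \<le> m" and mb: "m \<le> b"
  shows "abs_cont_on {a..b} f"
proof (rule abs_cont_onI)
  fix e :: real assume e: "e > 0"
  obtain d1 where d1: "d1 > 0" and H1: "\<And>n::nat. \<And>a' b'. \<forall>i<n. a' i \<in> {a..m} \<and> b' i \<in> {a..m} \<and> a' i \<le> b' i \<Longrightarrow>
        disjoint_family_on (\<lambda>i. {a' i<..<b' i}) {..<n} \<Longrightarrow> (\<Sum>i<n. b' i - a' i) < d1
        \<Longrightarrow> (\<Sum>i<n. norm (f (b' i) - f (a' i))) < e/2"
    using abs_cont_onD[OF f1, of "e/2"] e by auto
  obtain d2 where d2: "d2 > 0" and H2: "\<And>n::nat. \<And>a' b'. \<forall>i<n. a' i \<in> {m..b} \<and> b' i \<in> {m..b} \<and> a' i \<le> b' i \<Longrightarrow>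
        disjoint_family_on (\<lambda>i. {a' i<..<b' i}) {..<n} \<Longrightarrow> (\<Sum>i<n. b' i - a' i) < d2
        \<Longrightarrow> (\<Sum>i<n. norm (f (b' i) - f (a' i))) < e/2"
    using abs_cont_onD[OF f2, of "e/2"] e by auto
  show "\<exists>d>0. \<forall>n::nat. \<forall>a' b'. (\<forall>i<n. a' i \<in> {a..b} \<and> b' i \<in> {a..b} \<and> a' i \<le> b' i) \<longrightarrow>
        disjoint_family_on (\<lambda>i. {a' i<..<b' i}) {..<n} \<longrightarrow> (\<Sum>i<n. b' i - a' i) < d
        \<longrightarrow> (\<Sum>i<n. norm (f (b' i) - f (a' i))) < e"
  proof (intro exI[of _ "min d1 d2"] conjI allI impI)
    show "min d1 d2 > 0" using d1 d2 by simp
    fix n :: nat and a' b' assume ab: "\<forall>i<n. a' i \<in> {a..b} \<and> b' i \<in> {a..b} \<and> a' i \<le> b' i"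
      and dj: "disjoint_family_on (\<lambda>i. {a' i<..<b' i}) {..<n}"
      and s: "(\<Sum>i<n. b' i - a' i) < min d1 d2"
    have "{min (a' i) m<..<min (b' i) m} \<subseteq> {a' i<..<b' i}" "{max (a' i) m<..<max (b' i) m} \<subseteq> {a' i<..<b' i}"
      for i by auto
    then have dj1: "disjoint_family_on (\<lambda>i. {min (a' i) m<..<min (b' i) m}) {..<n}"
      and dj2: "disjoint_family_on (\<lambda>i. {max (a' i) m<..<max (b' i) m}) {..<n}"
      using dj unfolding disjoint_family_on_def by blast+
    have "(\<Sum>i<n. min (b' i) m - min (a' i) m) \<le> (\<Sum>i<n. b' i - a' i)"
      and "(\<Sum>i<n. max (b' i) m - max (a' i) m) \<le> (\<Sum>i<n. b' i - a' i)"
      by (rule sum_mono, use ab in \<open>auto simp: min_def max_def\<close>)+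
    then have s1: "(\<Sum>i<n. min (b' i) m - min (a' i) m) < d1"
      and s2: "(\<Sum>i<n. max (b' i) m - max (a' i) m) < d2" using s by linarith+
    have "(\<Sum>i<n. norm (f (b' i) - f (a' i))) \<le> (\<Sum>i<n. norm (f (min (b' i) m) - f (min (a' i) m))
        + norm (f (max (b' i) m) - f (max (a' i) m)))"
      by (rule sum_mono) (use ab in \<open>auto intro: norm_diff_le_split_at\<close>)
    also have "\<dots> < e/2 + e/2"
      unfolding sum.distrib using ab am mb
      by (intro add_strict_mono H1[OF _ dj1 s1] H2[OF _ dj2 s2]) auto
    finally show "(\<Sum>i<n. norm (f (b' i) - f (a' i))) < e" by simp
  qed
qed

lemma abs_cont_on_sum_finite_family:
  fixes h :: "real \<Rightarrow> real" and p q :: "'c \<Rightarrow> real"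
  assumes H: "\<And>n::nat. \<And>a' b'. \<forall>i<n. a' i \<in> {a..b} \<and> b' i \<in> {a..b} \<and> a' i \<le> b' i \<Longrightarrow>
        disjoint_family_on (\<lambda>i. {a' i<..<b' i}) {..<n} \<Longrightarrow> (\<Sum>i<n. b' i - a' i) < d
        \<Longrightarrow> (\<Sum>i<n. norm (h (b' i) - h (a' i))) < e"
   and F: "finite F"
   and pq: "\<And>C. C \<in> F \<Longrightarrow> p C \<in> {a..b} \<and> q C \<in> {a..b} \<and> p C \<le> q C"
   and dj: "\<And>C D. C \<in> F \<Longrightarrow> D \<in> F \<Longrightarrow> C \<noteq> D \<Longrightarrow> {p C<..<q C} \<inter> {p D<..<q D} = {}"
   and s: "(\<Sum>C\<in>F. q C - p C) < d"
  shows "(\<Sum>C\<in>F. \<bar>h (q C) - h (p C)\<bar>) < e"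
proof -
  obtain g where g: "bij_betw g {..<card F} F"
    using ex_bij_betw_nat_finite[OF F] by (auto simp: atLeast0LessThan)
  have "(\<Sum>i<card F. norm (h ((q \<circ> g) i) - h ((p \<circ> g) i))) < e"
  proof (rule H)
    show "\<forall>i<card F. (p \<circ> g) i \<in> {a..b} \<and> (q \<circ> g) i \<in> {a..b} \<and> (p \<circ> g) i \<le> (q \<circ> g) i"
      using pq g by (auto simp: bij_betw_def)
    show "disjoint_family_on (\<lambda>i. {(p \<circ> g) i<..<(q \<circ> g) i}) {..<card F}"
      unfolding disjoint_family_on_def
    proof (intro ballI impI)
      fix i j assume "i \<in> {..<card F}" "j \<in> {..<card F}" "i \<noteq> j"
      then have "g i \<in> F" "g j \<in> F" "g i \<noteq> g j" using g by (auto simp: bij_betw_def inj_on_def)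
      then show "{(p \<circ> g) i<..<(q \<circ> g) i} \<inter> {(p \<circ> g) j<..<(q \<circ> g) j} = {}" using dj by simp
    qed
    show "(\<Sum>i<card F. (q \<circ> g) i - (p \<circ> g) i) < d"
      using s sum.reindex_bij_betw[OF g, of "\<lambda>C. q C - p C"] by simp
  qed
  then show ?thesis
    using sum.reindex_bij_betw[OF g, of "\<lambda>C. \<bar>h (q C) - h (p C)\<bar>"] by simp
qed

lemma components_interval_bounds:
  fixes C U :: "real set"
  assumes C: "C \<in> components U" and U: "U \<subseteq> {a<..<b}"
  shows "{Inf C<..<Sup C} \<subseteq> C" "C \<subseteq> {Inf C..Sup C}" "a \<le> Inf C" "Sup C \<le> b" "Inf C \<le> Sup C"
proof -
  have ne: "C \<noteq> {}" using C in_components_nonempty by blast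
  have sub: "C \<subseteq> {a<..<b}" using in_components_subset[OF C] U by blast
  have bb: "bdd_below C" "bdd_above C"
    using sub unfolding bdd_below_def bdd_above_def by (meson greaterThanLessThan_iff less_imp_le subsetD)+
  have conn: "connected C" using in_components_connected[OF C] .
  show "C \<subseteq> {Inf C..Sup C}" using bb by (auto intro: cInf_lower cSup_upper)
  show "{Inf C<..<Sup C} \<subseteq> C"
  proof
    fix t assume t: "t \<in> {Inf C<..<Sup C}"
    obtain c1 where c1: "c1 \<in> C" "c1 < t" using t cInf_less_iff[OF ne bb(1)] by auto
    obtain c2 where c2: "c2 \<in> C" "t < c2" using t less_cSup_iff[OF ne bb(2)] by auto
    show "t \<in> C" using connected_contains_Icc[OF conn c1(1) c2(1)] c1 c2 by auto
  qed
  show "a \<le> Inf C" using sub ne by (intro cInf_greatest) auto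
  show "Sup C \<le> b" using sub ne by (intro cSup_least) auto
  show "Inf C \<le> Sup C" using ne bb by (meson cInf_le_cSup)
qed

lemma sum_component_lengths_le_measure:
  fixes V :: "real set"
  assumes V: "open V" "V \<subseteq> {a<..<b}" and F: "finite F" "F \<subseteq> components V"
  shows "(\<Sum>C\<in>F. Sup C - Inf C) \<le> measure lebesgue V"
proof -
  note ci = components_interval_bounds[OF _ V(2)]
  have "(\<Sum>C\<in>F. Sup C - Inf C) = (\<Sum>C\<in>F. measure lebesgue {Inf C<..<Sup C})"
    by (rule sum.cong) (use ci(5) F(2) in auto)
  also have "\<dots> = measure lebesgue (\<Union>C\<in>F. {Inf C<..<Sup C})"
  proof (rule measure_UNION'[symmetric, OF F(1)])
    show "pairwise (\<lambda>C D. disjnt {Inf C<..<Sup C} {Inf D<..<Sup D}) F"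
      using pairwise_disjoint_components[of V] ci(1) F(2)
      unfolding pairwise_def disjnt_def by (meson disjoint_iff subsetD)
  qed simp
  also have "\<dots> \<le> measure lebesgue V"
  proof (rule measure_mono_fmeasurable)
    show "(\<Union>C\<in>F. {Inf C<..<Sup C}) \<subseteq> V"
      using ci(1) F(2) in_components_subset by blast
    show "V \<in> lmeasurable"
      using V by (intro lmeasurable_open) (auto intro: bounded_subset[of "{a<..<b}"])
  qed (use F(1) in auto)
  finally show ?thesis .
qed

lemma continuous_image_interval_measure:
  fixes h :: "real \<Rightarrow> real"
  assumes "continuous_on {s..t} h" "s \<le> t"
  obtains p q where "s \<le> p" "p \<le> q" "q \<le> t" "h ` {s..t} \<in> lmeasurable"
    "measure lebesgue (h ` {s..t}) = \<bar>h q - h p\<bar>"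
proof -
  obtain c1 c2 where c: "h ` {s..t} = {c1..c2}" "c1 \<le> c2"
    using continuous_image_closed_interval[OF assms(2,1)] by blast
  then obtain p1 p2 where p: "p1 \<in> {s..t}" "p2 \<in> {s..t}" "h p1 = c1" "h p2 = c2"
    by (metis atLeastAtMost_iff imageE order.refl)
  show thesis
    by (rule that[of "min p1 p2" "max p1 p2"]) (use p c in \<open>auto simp: min_def max_def\<close>)
qed

lemma abs_cont_on_components_sum:
  fixes h :: "real \<Rightarrow> real"
  assumes H: "\<And>n::nat. \<And>a' b'. \<forall>i<n. a' i \<in> {a..b} \<and> b' i \<in> {a..b} \<and> a' i \<le> b' i \<Longrightarrow>
        disjoint_family_on (\<lambda>i. {a' i<..<b' i}) {..<n} \<Longrightarrow> (\<Sum>i<n. b' i - a' i) < d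
        \<Longrightarrow> (\<Sum>i<n. norm (h (b' i) - h (a' i))) < e"
    and V: "open V" "V \<subseteq> {a<..<b}" "measure lebesgue V < d"
    and F: "finite F" "F \<subseteq> components V"
    and pq: "\<And>C. C \<in> F \<Longrightarrow> Inf C \<le> p C \<and> p C \<le> q C \<and> q C \<le> Sup C"
  shows "(\<Sum>C\<in>F. \<bar>h (q C) - h (p C)\<bar>) < e"
proof (rule abs_cont_on_sum_finite_family[OF H F(1)])
  note ci = components_interval_bounds[OF _ V(2)]
  have FC: "C \<in> components V" if "C \<in> F" for C using that F(2) by blast
  show "p C \<in> {a..b} \<and> q C \<in> {a..b} \<and> p C \<le> q C" if "C \<in> F" for C
    using pq[OF that] ci(3,4)[OF FC[OF that]] by simp
  show "{p C<..<q C} \<inter> {p D<..<q D} = {}" if "C \<in> F" "D \<in> F" "C \<noteq> D" for C D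
  proof -
    have "C \<inter> D = {}"
      using pairwise_disjoint_components[of V] FC that unfolding pairwise_def by blast
    moreover have "{p E<..<q E} \<subseteq> E" if "E \<in> F" for E
      using pq[OF that] ci(1)[OF FC[OF that]] by auto
    ultimately show ?thesis using that by blast
  qed
  have "(\<Sum>C\<in>F. q C - p C) \<le> (\<Sum>C\<in>F. Sup C - Inf C)"
    by (rule sum_mono) (use pq in \<open>meson diff_mono\<close>)
  also have "\<dots> \<le> measure lebesgue V"
    by (rule sum_component_lengths_le_measure[OF V(1,2) F])
  finally show "(\<Sum>C\<in>F. q C - p C) < d" using V(3) by linarith
qed

lemma abs_cont_on_components_image_measure:
  fixes h :: "real \<Rightarrow> real"
  assumes ac: "abs_cont_on {a..b} h" and e: "e > 0"
  obtains d where "d > 0" "\<And>V. open V \<Longrightarrow> V \<subseteq> {a<..<b} \<Longrightarrow> measure lebesgue V < d \<Longrightarrow>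
    (\<Union>C\<in>components V. h ` {Inf C..Sup C}) \<in> lmeasurable \<and>
    measure lebesgue (\<Union>C\<in>components V. h ` {Inf C..Sup C}) \<le> e"
proof -
  obtain d where d: "d > 0" and H: "\<And>n::nat. \<And>a' b'. \<forall>i<n. a' i \<in> {a..b} \<and> b' i \<in> {a..b} \<and> a' i \<le> b' i \<Longrightarrow>
        disjoint_family_on (\<lambda>i. {a' i<..<b' i}) {..<n} \<Longrightarrow> (\<Sum>i<n. b' i - a' i) < d
        \<Longrightarrow> (\<Sum>i<n. norm (h (b' i) - h (a' i))) < e"
    using abs_cont_onD[OF ac e] by blast
  have "(\<Union>C\<in>components V. h ` {Inf C..Sup C}) \<in> lmeasurable \<and>
    measure lebesgue (\<Union>C\<in>components V. h ` {Inf C..Sup C}) \<le> e"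
    if V: "open V" "V \<subseteq> {a<..<b}" "measure lebesgue V < d" for V
  proof -
    note ci = components_interval_bounds[OF _ V(2)]
    have "\<exists>pq. Inf C \<le> fst pq \<and> fst pq \<le> snd pq \<and> snd pq \<le> Sup C \<and> h ` {Inf C..Sup C} \<in> lmeasurable \<and>
        measure lebesgue (h ` {Inf C..Sup C}) = \<bar>h (snd pq) - h (fst pq)\<bar>" if "C \<in> components V" for C
    proof -
      have "continuous_on {Inf C..Sup C} h"
        by (rule continuous_on_subset[OF abs_cont_on_imp_continuous_on[OF ac]]) (use ci(3,4)[OF that] in auto)
      from continuous_image_interval_measure[OF this ci(5)[OF that]] show ?thesis
        by (metis fst_conv snd_conv)
    qed
    then obtain pq where pq: "\<And>C. C \<in> components V \<Longrightarrow> Inf C \<le> fst (pq C) \<and> fst (pq C) \<le> snd (pq C) \<and>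
        snd (pq C) \<le> Sup C \<and> h ` {Inf C..Sup C} \<in> lmeasurable \<and>
        measure lebesgue (h ` {Inf C..Sup C}) = \<bar>h (snd (pq C)) - h (fst (pq C))\<bar>"
      by metis
    have "measure lebesgue (\<Union>C\<in>F. h ` {Inf C..Sup C}) \<le> e"
      if F: "F \<subseteq> components V" "finite F" for F
    proof -
      have "measure lebesgue (\<Union>C\<in>F. h ` {Inf C..Sup C}) \<le> (\<Sum>C\<in>F. measure lebesgue (h ` {Inf C..Sup C}))"
        by (rule measure_UNION_le[OF F(2)]) (use pq F(1) in blast)
      also have "\<dots> = (\<Sum>C\<in>F. \<bar>h (snd (pq C)) - h (fst (pq C))\<bar>)"
        by (rule sum.cong) (use pq F(1) in auto)
      also have "\<dots> < e"
      proof (rule abs_cont_on_components_sum[OF H V F(2,1)])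
        fix C assume "C \<in> F"
        with F(1) have "C \<in> components V" by blast
        from pq[OF this] show "Inf C \<le> fst (pq C) \<and> fst (pq C) \<le> snd (pq C) \<and> snd (pq C) \<le> Sup C"
          by blast
      qed
      finally show ?thesis by linarith
    qed
    moreover have "countable (components V)"
      using open_components[OF V(1)] pairwise_disjoint_components[of V]
      by (intro countable_disjoint_open_subsets) (auto simp: pairwise_def disjnt_def)
    ultimately show ?thesis
      using fmeasurable_UN_bound[of "components V" "\<lambda>C. h ` {Inf C..Sup C}" lebesgue e]
        measure_UN_bound[of "components V" "\<lambda>C. h ` {Inf C..Sup C}" lebesgue e] pq
      by blast
  qed
  with d show thesis by (rule that)
qed

lemma negligible_small_open_cover:
  assumes N: "negligible N" "N \<subseteq> {a..b}" and d: "d > 0"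
  obtains V :: "real set" where "open V" "V \<subseteq> {a<..<b}" "measure lebesgue V < d" "N - {a, b} \<subseteq> V"
proof -
  have Nl: "N \<in> lmeasurable" "measure lebesgue N = 0"
    using N(1) by (auto simp: negligible_imp_measurable negligible_imp_measure0)
  obtain U where U: "open U" "N \<subseteq> U" "U - N \<in> lmeasurable" "emeasure lebesgue (U - N) < ennreal d"
    using sets_lebesgue_outer_open[OF fmeasurableD[OF Nl(1)] d] by blast
  define V where "V = U \<inter> {a<..<b}"
  have "measure lebesgue V \<le> measure lebesgue ((U - N) \<union> N)"
  proof (rule measure_mono_fmeasurable)
    show "V \<in> sets lebesgue" using U(1) by (auto simp: V_def)
    show "(U - N) \<union> N \<in> lmeasurable" using U(3) Nl(1) by (rule fmeasurable.Un)
  qed (auto simp: V_def)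
  also have "\<dots> \<le> measure lebesgue (U - N) + measure lebesgue N"
    by (rule measure_Un_le) (use U(3) Nl(1) in auto)
  also have "\<dots> < d"
    using U(3,4) d Nl(2) by (simp add: emeasure_eq_measure2 ennreal_less_iff)
  finally show thesis
    by (rule that[rotated 2]) (use U(1,2) N(2) in \<open>auto simp: V_def\<close>)
qed

lemma abs_cont_on_negligible_image:
  fixes h :: "real \<Rightarrow> real"
  assumes ac: "abs_cont_on {a..b} h" and N: "negligible N" "N \<subseteq> {a..b}"
  shows "negligible (h ` N)"
  unfolding negligible_outer_le
proof (intro allI impI)
  fix e :: real assume e: "e > 0"
  obtain d where d: "d > 0" and img: "\<And>V. open V \<Longrightarrow> V \<subseteq> {a<..<b} \<Longrightarrow> measure lebesgue V < d \<Longrightarrow>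
      (\<Union>C\<in>components V. h ` {Inf C..Sup C}) \<in> lmeasurable \<and>
      measure lebesgue (\<Union>C\<in>components V. h ` {Inf C..Sup C}) \<le> e"
    using abs_cont_on_components_image_measure[OF ac e] by blast
  obtain V where V: "open V" "V \<subseteq> {a<..<b}" "measure lebesgue V < d" "N - {a, b} \<subseteq> V"
    using negligible_small_open_cover[OF N d] by blast
  have B: "(\<Union>C\<in>components V. h ` {Inf C..Sup C}) \<in> lmeasurable \<and>
      measure lebesgue (\<Union>C\<in>components V. h ` {Inf C..Sup C}) \<le> e"
    using img[OF V(1-3)] .
  define S where "S = (\<Union>C\<in>components V. h ` {Inf C..Sup C}) \<union> {h a, h b}"
  have "h ` N \<subseteq> S"
  proof
    fix y assume "y \<in> h ` N"
    then obtain t where t: "t \<in> N" "y = h t" by blast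
    show "y \<in> S"
    proof (cases "t = a \<or> t = b")
      case False
      then have "t \<in> V" using t V(4) by blast
      then obtain C where "C \<in> components V" "t \<in> C" using Union_components[of V] by blast
      then show ?thesis
        using components_interval_bounds(2)[OF _ V(2)] t by (auto simp: S_def)
    qed (use t in \<open>auto simp: S_def\<close>)
  qed
  moreover have "S \<in> lmeasurable" "measure lebesgue S \<le> e"
  proof -
    have "negligible {h a, h b}" by simp
    then have "{h a, h b} \<in> lmeasurable" "measure lebesgue {h a, h b} = 0"
      by (rule negligible_imp_measurable, rule negligible_imp_measure0)
    then show "S \<in> lmeasurable" unfolding S_def using B by (intro fmeasurable.Un) auto
    have "measure lebesgue S \<le> measure lebesgue (\<Union>C\<in>components V. h ` {Inf C..Sup C}) + measure lebesgue {h a, h b}"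
      unfolding S_def by (rule measure_Un_le) (use B \<open>{h a, h b} \<in> lmeasurable\<close> in auto)
    then show "measure lebesgue S \<le> e" using B \<open>measure lebesgue {h a, h b} = 0\<close> by linarith
  qed
  ultimately show "\<exists>S. h ` N \<subseteq> S \<and> S \<in> lmeasurable \<and> measure lebesgue S \<le> e" by blast
qed

lemma negligible_image_zero_derivative:
  fixes h :: "real \<Rightarrow> real"
  assumes der: "\<And>t. t \<in> S \<Longrightarrow> (h has_real_derivative 0) (at t within S)"
  shows "negligible (h ` S)"
proof -
  let ?H = "\<lambda>v::real^1. vec (h (v$1)) :: real^1"
  have d: "(?H has_derivative (\<lambda>w. 0)) (at v within vec ` S)" if v: "v \<in> vec ` S" for v
  proof -
    obtain t where t: "t \<in> S" "v = vec t" using v by blast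
    have "(h has_derivative (\<lambda>x. x * 0)) (at t within S)"
    proof -
      have "(\<lambda>x::real. x * 0) = (*) 0" by (simp add: fun_eq_iff)
      then show ?thesis using der[OF t(1)] by (simp add: has_field_derivative_def)
    qed
    moreover have "((*\<^sub>R) 0 :: real^1 \<Rightarrow> real^1) = (\<lambda>w. 0)" by (simp add: fun_eq_iff)
    ultimately show ?thesis using has_derivative_vector_1[of h "\<lambda>_. 0" t S] t by simp
  qed
  have "matrix (\<lambda>w::real^1. 0::real^1) = 0" by (simp add: matrix_def vec_eq_iff)
  then have neg: "negligible (?H ` vec ` S)"
    by (intro baby_Sard[OF _ d]) (auto simp: rank_0)
  have "(\<lambda>v::real^1. v$1) differentiable_on (?H ` vec ` S)"
    by (simp add: bounded_linear_imp_differentiable_on bounded_linear_vec_nth)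
  then have "negligible ((\<lambda>v::real^1. v$1) ` (?H ` vec ` S))"
    by (intro negligible_differentiable_image_negligible[OF _ neg]) simp
  moreover have "(\<lambda>v::real^1. v$1) ` (?H ` vec ` S) = h ` S"
    by (auto simp: image_comp o_def image_iff)
  ultimately show ?thesis by simp
qed

lemma abs_cont_on_zero_derivative_const:
  fixes h :: "real \<Rightarrow> real"
  assumes ac: "abs_cont_on {a..b} h" and N: "negligible N"
   and der: "\<And>t. t \<in> {a..b} - N \<Longrightarrow> (h has_real_derivative 0) (at t within {a..b})"
   and t: "t \<in> {a..b}"
  shows "h t = h a"
proof (rule ccontr)
  assume ne: "h t \<noteq> h a"
  have "negligible (h ` ({a..b} - N))"
    by (rule negligible_image_zero_derivative) (use der in \<open>auto intro: DERIV_subset\<close>)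
  moreover have "negligible (h ` (N \<inter> {a..b}))"
    by (rule abs_cont_on_negligible_image[OF ac]) (use N in \<open>auto intro: negligible_subset\<close>)
  moreover have "h ` {a..b} = h ` ({a..b} - N) \<union> h ` (N \<inter> {a..b})" by auto
  ultimately have neg: "negligible (h ` {a..b})" by simp
  have "connected (h ` {a..b})"
    by (rule connected_continuous_image[OF abs_cont_on_imp_continuous_on[OF ac]]) simp
  then have "{min (h t) (h a)..max (h t) (h a)} \<subseteq> h ` {a..b}"
    by (rule connected_contains_Icc) (use t in \<open>auto simp: min_def max_def\<close>)
  then have "negligible {min (h t) (h a)..max (h t) (h a)}" using negligible_subset[OF neg] by blast
  then have "box (min (h t) (h a)) (max (h t) (h a)) = {}"
    using negligible_interval(1)[of "min (h t) (h a)" "max (h t) (h a)"] by (simp add: cbox_interval)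
  then show False using ne by (auto simp: box_real min_def max_def split: if_splits)
qed

lemma abs_cont_on_eq_antiderivative:
  fixes f G g :: "real \<Rightarrow> real"
  assumes ac: "abs_cont_on {a..b} f" and N: "negligible N"
   and df: "\<And>t. t \<in> {a..b} - N \<Longrightarrow> (f has_real_derivative g t) (at t within {a..b})"
   and dG: "\<And>t. t \<in> {a..b} \<Longrightarrow> (G has_real_derivative g t) (at t within {a..b})"
   and B: "\<And>t. t \<in> {a..b} \<Longrightarrow> \<bar>g t\<bar> \<le> B"
   and t: "t \<in> {a..b}"
  shows "f t - f a = G t - G a"
proof -
  have "B-lipschitz_on {a..b} G"
  proof (rule lipschitz_onI)
    show "0 \<le> B" using B[OF t] by linarith
    show "dist (G x) (G y) \<le> B * dist x y" if "x \<in> {a..b}" "y \<in> {a..b}" for x y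
      using field_differentiable_bound[OF convex_real_interval(5) dG, of B x y] B that
      by (auto simp: dist_norm dist_real_def)
  qed
  then have "abs_cont_on {a..b} (\<lambda>s. f s - G s)"
    by (intro abs_cont_on_diff[OF ac] lipschitz_imp_abs_cont_on)
  then have "(\<lambda>s. f s - G s) t = (\<lambda>s. f s - G s) a"
    by (rule abs_cont_on_zero_derivative_const[OF _ N _ t])
      (use DERIV_diff[OF df dG] in fastforce)
  then show ?thesis by simp
qed

lemma abs_cont_on_affine:
  fixes f :: "real \<Rightarrow> real"
  assumes ac: "abs_cont_on {a..b} f" and N: "negligible N"
    and d: "\<And>s. s \<in> {a..b} - N \<Longrightarrow> (f has_real_derivative c) (at s within {a..b})"
    and t: "t \<in> {a..b}"
  shows "f t = f a + c * (t - a)"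
proof -
  have "f t - f a = c * (t - a) - c * (a - a)"
    by (rule abs_cont_on_eq_antiderivative[OF ac N d _ _ t, where G="\<lambda>t. c * (t - a)" and B="\<bar>c\<bar>"])
      (auto intro!: derivative_eq_intros)
  then show ?thesis by simp
qed

lemma abs_cont_on_quadratic:
  fixes f :: "real \<Rightarrow> real"
  assumes ac: "abs_cont_on {a..b} f" and N: "negligible N"
    and d: "\<And>s. s \<in> {a..b} - N \<Longrightarrow> (f has_real_derivative c0 + c1 * (s - a)) (at s within {a..b})"
    and t: "t \<in> {a..b}"
  shows "f t = f a + c0 * (t - a) + c1 * (t - a)^2 / 2"
proof -
  have "f t - f a = (c0 * (t - a) + c1 * (t - a)^2 / 2) - (c0 * (a - a) + c1 * (a - a)^2 / 2)"
  proof (rule abs_cont_on_eq_antiderivative[OF ac N d _ _ t, where B="\<bar>c0\<bar> + \<bar>c1\<bar> * (b - a)"])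
    show "((\<lambda>t. c0 * (t - a) + c1 * (t - a)^2 / 2) has_real_derivative c0 + c1 * (s - a)) (at s within {a..b})"
      for s by (auto intro!: derivative_eq_intros simp: field_simps)
    show "\<bar>c0 + c1 * (s - a)\<bar> \<le> \<bar>c0\<bar> + \<bar>c1\<bar> * (b - a)" if "s \<in> {a..b}" for s
      using that abs_triangle_ineq[of c0 "c1 * (s - a)"] mult_left_mono[of "s - a" "b - a" "\<bar>c1\<bar>"]
      by (simp add: abs_mult)
  qed
  then show ?thesis by simp
qed

lemma has_vector_derivative_fst:
  "(f has_vector_derivative v) F \<Longrightarrow> ((\<lambda>t. fst (f t)) has_vector_derivative fst v) F"
  unfolding has_vector_derivative_def by (drule has_derivative_fst) simp

lemma has_vector_derivative_snd:
  "(f has_vector_derivative v) F \<Longrightarrow> ((\<lambda>t. snd (f t)) has_vector_derivative snd v) F"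
  unfolding has_vector_derivative_def by (drule has_derivative_snd) simp

lemma AE_lebesgue_negligibleE:
  assumes "AE t in lebesgue. P t"
  obtains N where "negligible N" "\<And>t. t \<notin> N \<Longrightarrow> P t"
proof -
  from AE_E3[OF assms] obtain N where "\<And>x. x \<in> space lebesgue - N \<Longrightarrow> P x" "N \<in> null_sets lebesgue"
    by metis
  then show ?thesis using that[of N] by (auto simp: negligible_iff_null_sets)
qed

lemma AE_lebesgue_negligibleI:
  assumes "negligible N" "\<And>t. t \<notin> N \<Longrightarrow> P t"
  shows "AE t in lebesgue. P t"
  by (rule AE_I'[of N]) (use assms in \<open>auto simp: negligible_iff_null_sets\<close>)

lemma continuous_on_zero_off_negligible:
  fixes f :: "real \<Rightarrow> real"
  assumes cont: "continuous_on {a..b} f" and ab: "a < b" and N: "negligible N"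
    and z: "\<And>t. t \<in> {a..b} - N \<Longrightarrow> f t = 0" and t: "t \<in> {a..b}"
  shows "f t = 0"
proof (rule ccontr)
  assume ne: "f t \<noteq> 0"
  obtain d where d: "d > 0" and H: "\<And>s. s \<in> {a..b} \<Longrightarrow> dist s t < d \<Longrightarrow> dist (f s) (f t) < \<bar>f t\<bar>"
    using cont t ne unfolding continuous_on_iff by (metis zero_less_abs_iff)
  define J where "J = {max a (t - d)<..<min b (t + d)}"
  have "\<not> negligible J" unfolding J_def using ab d t
    by (subst box_real(1)[symmetric], subst negligible_interval(2)) (auto simp: box_real)
  then obtain s where s: "s \<in> J" "s \<notin> N" using N negligible_subset by blast
  then have "s \<in> {a..b}" "dist s t < d" unfolding J_def by (auto simp: dist_real_def)
  then show False using H z s by (fastforce simp: dist_real_def)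
qed

lemma continuous_on_nonzero_sgn_eq:
  fixes f :: "real \<Rightarrow> real"
  assumes cont: "continuous_on S f" and "connected S" and nz: "\<And>t. t \<in> S \<Longrightarrow> f t \<noteq> 0"
    and s: "s \<in> S" and t: "t \<in> S"
  shows "sgn (f s) = sgn (f t)"
proof (rule ccontr)
  assume ne: "sgn (f s) \<noteq> sgn (f t)"
  have c: "connected (f ` S)" using connected_continuous_image[OF cont \<open>connected S\<close>] .
  have "{min (f s) (f t)..max (f s) (f t)} \<subseteq> f ` S"
    by (rule connected_contains_Icc[OF c]) (use s t in \<open>auto simp: min_def max_def\<close>)
  moreover have "0 \<in> {min (f s) (f t)..max (f s) (f t)}"
    using ne nz[OF s] nz[OF t] by (auto simp: sgn_real_def min_def max_def split: if_splits)
  ultimately show False using nz by auto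
qed

lemma continuous_on_closed_interval_nonneg:
  fixes f :: "real \<Rightarrow> real"
  assumes "continuous_on {\<alpha>..\<beta>} f" "\<alpha> < \<beta>" "\<And>t. t \<in> {\<alpha><..<\<beta>} \<Longrightarrow> 0 \<le> f t" "t \<in> {\<alpha>..\<beta>}"
  shows "0 \<le> f t"
  using continuous_ge_on_closure[of "{\<alpha><..<\<beta>}" f t 0] assms by simp

section \<open>Admissible and extremal trajectories of \<open>\<partial>\<^sub>x\<close> and \<open>x \<partial>\<^sub>y\<close>\<close>

definition admissible_at :: "real \<Rightarrow> (real \<Rightarrow> real \<times> real) \<Rightarrow> (real \<Rightarrow> real \<times> real) \<Rightarrow> real \<Rightarrow> bool" where
  "admissible_at T \<gamma> u t \<longleftrightarrow> \<bar>fst (u t)\<bar> \<le> 1 \<and> \<bar>snd (u t)\<bar> \<le> 1 \<and>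
     (\<gamma> has_vector_derivative (fst (u t), snd (u t) * fst (\<gamma> t))) (at t within {0..T})"

lemma admissible_iff:
  "admissible T \<gamma> u \<longleftrightarrow> 0 \<le> T \<and> abs_cont_on {0..T} \<gamma> \<and> u measurable_on {0..T} \<and>
     (\<exists>N. negligible N \<and> (\<forall>t\<in>{0..T} - N. admissible_at T \<gamma> u t))"
proof -
  have field: "fst (u t) *\<^sub>R X1 (\<gamma> t) + snd (u t) *\<^sub>R X2 (\<gamma> t) = (fst (u t), snd (u t) * fst (\<gamma> t))" for t
    by (simp add: X1_def X2_def)
  have "(AE t in lebesgue. t \<in> {0..T} \<longrightarrow> \<bar>fst (u t)\<bar> \<le> 1 \<and> \<bar>snd (u t)\<bar> \<le> 1) \<and>
      (AE t in lebesgue. t \<in> {0..T} \<longrightarrow> (\<gamma> has_vector_derivative (fst (u t) *\<^sub>R X1 (\<gamma> t) + snd (u t) *\<^sub>R X2 (\<gamma> t)))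
        (at t within {0..T})) \<longleftrightarrow> (AE t in lebesgue. t \<in> {0..T} \<longrightarrow> admissible_at T \<gamma> u t)"
    unfolding field admissible_at_def AE_conj_iff[symmetric] by (intro AE_cong) auto
  also have "\<dots> \<longleftrightarrow> (\<exists>N. negligible N \<and> (\<forall>t\<in>{0..T} - N. admissible_at T \<gamma> u t))"
  proof
    assume "AE t in lebesgue. t \<in> {0..T} \<longrightarrow> admissible_at T \<gamma> u t"
    then obtain N where "negligible N" "\<And>t. t \<notin> N \<Longrightarrow> t \<in> {0..T} \<longrightarrow> admissible_at T \<gamma> u t"
      by (rule AE_lebesgue_negligibleE) blast
    then show "\<exists>N. negligible N \<and> (\<forall>t\<in>{0..T} - N. admissible_at T \<gamma> u t)" by blast
  qed (auto intro: AE_lebesgue_negligibleI)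
  finally show ?thesis unfolding admissible_def by blast
qed

definition pontryagin_at ::
  "real \<Rightarrow> (real \<Rightarrow> real \<times> real) \<Rightarrow> (real \<Rightarrow> real \<times> real) \<Rightarrow> (real \<Rightarrow> real \<times> real) \<Rightarrow> real \<Rightarrow> real \<Rightarrow> bool"
where
  "pontryagin_at T lam \<gamma> u K t \<longleftrightarrow> admissible_at T \<gamma> u t \<and>
    (lam has_vector_derivative (-(snd (u t) * snd (lam t)), 0)) (at t within {0..T}) \<and>
    fst (u t) * fst (lam t) + snd (u t) * (snd (lam t) * fst (\<gamma> t)) =
      \<bar>fst (lam t)\<bar> + \<bar>snd (lam t) * fst (\<gamma> t)\<bar> \<and>
    \<bar>fst (lam t)\<bar> + \<bar>snd (lam t) * fst (\<gamma> t)\<bar> = K"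

lemma extremal_pair_pontryagin_ae:
  assumes "extremal_pair T lam \<gamma> u"
  obtains K N where "K \<ge> 0" "negligible N" "\<And>t. t \<in> {0..T} - N \<Longrightarrow> pontryagin_at T lam \<gamma> u K t"
proof -
  have adm: "admissible T \<gamma> u" using assms by (simp add: extremal_pair_def)
  obtain K where K: "K \<ge> 0" and KA: "AE t in lebesgue. t \<in> {0..T} \<longrightarrow>
        Ham (lam t) (\<gamma> t) (u t) = \<bar>lam t \<bullet> X1 (\<gamma> t)\<bar> + \<bar>lam t \<bullet> X2 (\<gamma> t)\<bar> \<and>
        \<bar>lam t \<bullet> X1 (\<gamma> t)\<bar> + \<bar>lam t \<bullet> X2 (\<gamma> t)\<bar> = K"
    using assms unfolding extremal_pair_def by blast
  have A1: "AE t in lebesgue. t \<in> {0..T} \<longrightarrow> \<bar>fst (u t)\<bar> \<le> 1 \<and> \<bar>snd (u t)\<bar> \<le> 1"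
    using adm by (simp add: admissible_def)
  have A2: "AE t in lebesgue. t \<in> {0..T} \<longrightarrow>
        (lam has_vector_derivative (- (snd (u t) * snd (lam t)), 0)) (at t within {0..T}) \<and>
        (\<gamma> has_vector_derivative (fst (u t) *\<^sub>R X1 (\<gamma> t) + snd (u t) *\<^sub>R X2 (\<gamma> t))) (at t within {0..T})"
    using assms by (simp add: extremal_pair_def)
  have "AE t in lebesgue. t \<in> {0..T} \<longrightarrow> pontryagin_at T lam \<gamma> u K t"
    using A1 A2 KA by eventually_elim (auto simp: pontryagin_at_def admissible_at_def Ham_def X1_def X2_def inner_prod_def)
  then obtain N where "negligible N" "\<And>t. t \<notin> N \<Longrightarrow> t \<in> {0..T} \<longrightarrow> pontryagin_at T lam \<gamma> u K t"
    by (rule AE_lebesgue_negligibleE) blast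
  with K show thesis by (intro that) auto
qed

lemma maximizing_control_eq_sgn:
  fixes u1 u2 p w :: real
  assumes "\<bar>u1\<bar> \<le> 1" "\<bar>u2\<bar> \<le> 1" "u1 * p + u2 * w = \<bar>p\<bar> + \<bar>w\<bar>"
  shows "p \<noteq> 0 \<Longrightarrow> u1 = sgn p" "w \<noteq> 0 \<Longrightarrow> u2 = sgn w"
proof -
  have le: "v * q \<le> \<bar>q\<bar>" if "\<bar>v\<bar> \<le> 1" for v q :: real
    using mult_right_mono[OF that abs_ge_zero[of q]] abs_ge_self[of "v * q"] by (simp add: abs_mult)
  have eq: "v = sgn q" if "\<bar>v\<bar> \<le> 1" "v * q = \<bar>q\<bar>" "q \<noteq> 0" for v q :: real
  proof (cases "q > 0")
    case True with that(2) show ?thesis by simp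
  next
    case False
    with that(2,3) have "(v + 1) * q = 0" by (simp add: algebra_simps)
    with False that(3) show ?thesis by simp
  qed
  have "u1 * p = \<bar>p\<bar>" "u2 * w = \<bar>w\<bar>" using le[OF assms(1), of p] le[OF assms(2), of w] assms(3) by linarith+
  then show "p \<noteq> 0 \<Longrightarrow> u1 = sgn p" "w \<noteq> 0 \<Longrightarrow> u2 = sgn w" using eq assms(1,2) by blast+
qed

locale pontryagin_extremal =
  fixes T K :: real and lam \<gamma> u :: "real \<Rightarrow> real \<times> real" and N :: "real set"
  assumes T_pos: "0 < T" and abs_cont_\<gamma>: "abs_cont_on {0..T} \<gamma>" and abs_cont_lam: "abs_cont_on {0..T} lam"
    and negligible_N: "negligible N" and pontryagin: "\<And>t. t \<in> {0..T} - N \<Longrightarrow> pontryagin_at T lam \<gamma> u K t"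
begin

definition ly :: real where "ly = snd (lam 0)"

lemma continuous_x: "continuous_on {0..T} (\<lambda>t. fst (\<gamma> t))"
  by (intro abs_cont_on_imp_continuous_on abs_cont_on_fst abs_cont_\<gamma>)

lemma continuous_lx: "continuous_on {0..T} (\<lambda>t. fst (lam t))"
  by (intro abs_cont_on_imp_continuous_on abs_cont_on_fst abs_cont_lam)

lemma lam_y_const: "t \<in> {0..T} \<Longrightarrow> snd (lam t) = ly"
  unfolding ly_def
proof (rule abs_cont_on_zero_derivative_const[OF abs_cont_on_snd[OF abs_cont_lam] negligible_N])
  fix s assume "s \<in> {0..T} - N"
  then have "(lam has_vector_derivative (-(snd (u s) * snd (lam s)), 0)) (at s within {0..T})"
    using pontryagin by (simp add: pontryagin_at_def admissible_at_def)
  then show "((\<lambda>s. snd (lam s)) has_real_derivative 0) (at s within {0..T})"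
    by (auto dest: has_vector_derivative_snd simp: has_real_derivative_iff_has_vector_derivative)
qed

lemma hamiltonian_const: "t \<in> {0..T} \<Longrightarrow> \<bar>fst (lam t)\<bar> + \<bar>ly\<bar> * \<bar>fst (\<gamma> t)\<bar> = K"
  using continuous_on_zero_off_negligible[OF _ T_pos negligible_N,
      of "\<lambda>s. \<bar>fst (lam s)\<bar> + \<bar>ly\<bar> * \<bar>fst (\<gamma> s)\<bar> - K"]
    pontryagin lam_y_const continuous_lx continuous_x
  by (force intro!: continuous_intros simp: pontryagin_at_def admissible_at_def abs_mult)

lemma control_eq_sgn:
  assumes "t \<in> {0..T} - N"
  shows "fst (lam t) \<noteq> 0 \<Longrightarrow> fst (u t) = sgn (fst (lam t))"
    and "ly * fst (\<gamma> t) \<noteq> 0 \<Longrightarrow> snd (u t) = sgn (ly * fst (\<gamma> t))"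
  using maximizing_control_eq_sgn[of "fst (u t)" "snd (u t)" "fst (lam t)" "ly * fst (\<gamma> t)"]
    pontryagin[OF assms] lam_y_const[of t] assms
  by (auto simp: pontryagin_at_def admissible_at_def)

end

text \<open>Both assumptions hold as soon as the extremal has a regular arc.\<close>

locale normal_pontryagin_extremal = pontryagin_extremal +
  assumes ly_nonzero: "ly \<noteq> 0" and K_pos: "K > 0"
begin

definition switch_time :: "real \<Rightarrow> bool" where
  "switch_time t \<longleftrightarrow> fst (lam t) = 0 \<or> fst (\<gamma> t) = 0"

definition arc_time :: real where "arc_time = K / \<bar>ly\<bar>"

lemma arc_time_pos: "arc_time > 0" and ly_arc_time: "\<bar>ly\<bar> * arc_time = K"
  using ly_nonzero K_pos by (auto simp: arc_time_def)

lemma regular_arc_signs: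
  assumes "0 \<le> \<alpha>" "\<alpha> < \<beta>" "\<beta> \<le> T" and reg: "\<And>t. t \<in> {\<alpha><..<\<beta>} \<Longrightarrow> \<not> switch_time t"
  obtains \<sigma> sx where "\<sigma> \<in> {-1,1}" "sx \<in> {-1,1}"
    "\<And>t. t \<in> {\<alpha><..<\<beta>} \<Longrightarrow> 0 < \<sigma> * fst (lam t)" "\<And>t. t \<in> {\<alpha><..<\<beta>} \<Longrightarrow> 0 < sx * fst (\<gamma> t)"
proof -
  define m where "m = (\<alpha> + \<beta>) / 2"
  have m: "m \<in> {\<alpha><..<\<beta>}" using assms by (auto simp: m_def)
  have sub: "{\<alpha><..<\<beta>} \<subseteq> {0..T}" using assms by auto
  have pos: "0 < sgn (f m) * f t" if "continuous_on {0..T} f" "\<And>t. t \<in> {\<alpha><..<\<beta>} \<Longrightarrow> f t \<noteq> 0"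
    "t \<in> {\<alpha><..<\<beta>}" for f :: "real \<Rightarrow> real" and t
  proof -
    have "sgn (f t) = sgn (f m)"
      by (rule continuous_on_nonzero_sgn_eq[OF continuous_on_subset[OF that(1) sub]]) (use that m in auto)
    then show ?thesis using that(2,3) by (metis sgn_mult_self_eq abs_sgn mult.commute zero_less_abs_iff sgn_mult)
  qed
  show thesis
  proof (rule that[of "sgn (fst (lam m))" "sgn (fst (\<gamma> m))"])
    show "sgn (fst (lam m)) \<in> {-1,1}" "sgn (fst (\<gamma> m)) \<in> {-1,1}"
      using reg[OF m] by (auto simp: switch_time_def sgn_real_def)
  qed (use pos[OF continuous_lx] pos[OF continuous_x] reg in \<open>auto simp: switch_time_def\<close>)
qed

lemma sgn_eq_of_pos_mult:
  fixes \<sigma> v :: real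
  assumes "\<sigma> \<in> {-1,1}" "0 < \<sigma> * v"
  shows "sgn v = \<sigma>"
  using assms by (auto simp: sgn_real_def zero_less_mult_iff)

lemma regular_arc_derivatives:
  assumes s: "s \<in> {\<alpha><..<\<beta>}" "s \<in> {0..T} - N" and sub: "{\<alpha>..\<beta>} \<subseteq> {0..T}"
    and \<sigma>: "\<sigma> \<in> {-1,1}" and sx: "sx \<in> {-1,1}"
    and pos: "0 < \<sigma> * fst (lam s)" "0 < sx * fst (\<gamma> s)"
  shows "(\<gamma> has_vector_derivative (\<sigma>, sgn ly * sx * fst (\<gamma> s))) (at s within {\<alpha>..\<beta>})"
    and "(lam has_vector_derivative (- (\<bar>ly\<bar> * sx), 0)) (at s within {\<alpha>..\<beta>})"
proof -
  have sgn: "sgn (fst (lam s)) = \<sigma>" "sgn (fst (\<gamma> s)) = sx"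
    using sgn_eq_of_pos_mult \<sigma> sx pos by blast+
  moreover have "fst (lam s) \<noteq> 0" "fst (\<gamma> s) \<noteq> 0" using pos by auto
  ultimately have u: "fst (u s) = \<sigma>" "snd (u s) = sgn ly * sx"
    using control_eq_sgn[OF s(2)] ly_nonzero by (simp_all add: sgn_mult)
  have "(\<gamma> has_vector_derivative (fst (u s), snd (u s) * fst (\<gamma> s))) (at s within {0..T})"
    using pontryagin[OF s(2)] by (simp add: pontryagin_at_def admissible_at_def)
  then show "(\<gamma> has_vector_derivative (\<sigma>, sgn ly * sx * fst (\<gamma> s))) (at s within {\<alpha>..\<beta>})"
    using u by (auto intro: has_vector_derivative_within_subset[OF _ sub])
  have "snd (u s) * snd (lam s) = \<bar>ly\<bar> * sx"
    using u lam_y_const[of s] s(2) by (simp add: abs_sgn mult.commute mult.left_commute)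
  moreover have "(lam has_vector_derivative (-(snd (u s) * snd (lam s)), 0)) (at s within {0..T})"
    using pontryagin[OF s(2)] by (simp add: pontryagin_at_def admissible_at_def)
  ultimately show "(lam has_vector_derivative (- (\<bar>ly\<bar> * sx), 0)) (at s within {\<alpha>..\<beta>})"
    by (auto intro: has_vector_derivative_within_subset[OF _ sub])
qed

lemma regular_arc_dynamics:
  assumes ab: "0 \<le> \<alpha>" "\<alpha> < \<beta>" "\<beta> \<le> T" and \<sigma>: "\<sigma> \<in> {-1,1}" and sx: "sx \<in> {-1,1}"
    and pos: "\<And>t. t \<in> {\<alpha><..<\<beta>} \<Longrightarrow> 0 < \<sigma> * fst (lam t) \<and> 0 < sx * fst (\<gamma> t)"
    and t: "t \<in> {\<alpha>..\<beta>}"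
  shows "fst (\<gamma> t) = fst (\<gamma> \<alpha>) + \<sigma> * (t - \<alpha>)"
    and "fst (lam t) = fst (lam \<alpha>) - \<bar>ly\<bar> * sx * (t - \<alpha>)"
    and "snd (\<gamma> t) = snd (\<gamma> \<alpha>) + sgn ly * sx * (fst (\<gamma> \<alpha>) * (t - \<alpha>) + \<sigma> * (t - \<alpha>)^2 / 2)"
proof -
  define N' where "N' = N \<union> {\<alpha>, \<beta>}"
  have N': "negligible N'" using negligible_N by (simp add: N'_def)
  have sub: "{\<alpha>..\<beta>} \<subseteq> {0..T}" using ab by auto
  have d\<gamma>: "(\<gamma> has_vector_derivative (\<sigma>, sgn ly * sx * fst (\<gamma> s))) (at s within {\<alpha>..\<beta>})"
    and dlam: "(lam has_vector_derivative (- (\<bar>ly\<bar> * sx), 0)) (at s within {\<alpha>..\<beta>})"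
    if "s \<in> {\<alpha>..\<beta>} - N'" for s
  proof -
    have s: "s \<in> {\<alpha><..<\<beta>}" "s \<in> {0..T} - N" using that ab by (auto simp: N'_def)
    show "(\<gamma> has_vector_derivative (\<sigma>, sgn ly * sx * fst (\<gamma> s))) (at s within {\<alpha>..\<beta>})"
      "(lam has_vector_derivative (- (\<bar>ly\<bar> * sx), 0)) (at s within {\<alpha>..\<beta>})"
      using regular_arc_derivatives[OF s sub \<sigma> sx] pos[OF s(1)] by blast+
  qed
  have abs_cont: "abs_cont_on {\<alpha>..\<beta>} (\<lambda>t. fst (\<gamma> t))" "abs_cont_on {\<alpha>..\<beta>} (\<lambda>t. snd (\<gamma> t))"
      "abs_cont_on {\<alpha>..\<beta>} (\<lambda>t. fst (lam t))"
    using abs_cont_on_subset[OF _ sub] abs_cont_on_fst abs_cont_on_snd abs_cont_\<gamma> abs_cont_lam by blast+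
  have x: "fst (\<gamma> s) = fst (\<gamma> \<alpha>) + \<sigma> * (s - \<alpha>)" if "s \<in> {\<alpha>..\<beta>}" for s
    using abs_cont_on_affine[OF abs_cont(1) N' _ that] d\<gamma>[THEN has_vector_derivative_fst]
    by (simp add: has_real_derivative_iff_has_vector_derivative)
  then show "fst (\<gamma> t) = fst (\<gamma> \<alpha>) + \<sigma> * (t - \<alpha>)" using t .
  show "fst (lam t) = fst (lam \<alpha>) - \<bar>ly\<bar> * sx * (t - \<alpha>)"
    using abs_cont_on_affine[OF abs_cont(3) N' _ t, where c="- (\<bar>ly\<bar> * sx)"] dlam[THEN has_vector_derivative_fst]
    by (simp add: has_real_derivative_iff_has_vector_derivative)
  have "((\<lambda>t. snd (\<gamma> t)) has_real_derivative
      sgn ly * sx * fst (\<gamma> \<alpha>) + sgn ly * sx * \<sigma> * (s - \<alpha>)) (at s within {\<alpha>..\<beta>})"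
    if "s \<in> {\<alpha>..\<beta>} - N'" for s
  proof -
    have xs: "fst (\<gamma> s) = fst (\<gamma> \<alpha>) + \<sigma> * (s - \<alpha>)" using that by (intro x) blast
    have "sgn ly * sx * fst (\<gamma> s) = sgn ly * sx * fst (\<gamma> \<alpha>) + sgn ly * sx * \<sigma> * (s - \<alpha>)"
      by (subst xs) (simp add: algebra_simps)
    with d\<gamma>[OF that, THEN has_vector_derivative_snd] show ?thesis
      by (simp add: has_real_derivative_iff_has_vector_derivative)
  qed
  from abs_cont_on_quadratic[OF abs_cont(2) N' this t]
  show "snd (\<gamma> t) = snd (\<gamma> \<alpha>) + sgn ly * sx * (fst (\<gamma> \<alpha>) * (t - \<alpha>) + \<sigma> * (t - \<alpha>)^2 / 2)"
    by (simp add: algebra_simps)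
qed

lemma regular_arc:
  assumes ab: "0 \<le> \<alpha>" "\<alpha> < \<beta>" "\<beta> \<le> T" and reg: "\<And>t. t \<in> {\<alpha><..<\<beta>} \<Longrightarrow> \<not> switch_time t"
  obtains \<sigma> sx where "\<sigma> \<in> {-1,1}" "sx \<in> {-1,1}"
    "\<And>t. t \<in> {\<alpha><..<\<beta>} \<Longrightarrow> 0 < \<sigma> * fst (lam t) \<and> 0 < sx * fst (\<gamma> t)"
    "\<And>t. t \<in> {\<alpha>..\<beta>} \<Longrightarrow> 0 \<le> \<sigma> * fst (lam t) \<and> 0 \<le> sx * fst (\<gamma> t)"
    "\<And>t. t \<in> {\<alpha>..\<beta>} \<Longrightarrow> fst (\<gamma> t) = fst (\<gamma> \<alpha>) + \<sigma> * (t - \<alpha>)"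
    "\<And>t. t \<in> {\<alpha>..\<beta>} \<Longrightarrow> fst (lam t) = fst (lam \<alpha>) - \<bar>ly\<bar> * sx * (t - \<alpha>)"
    "\<And>t. t \<in> {\<alpha>..\<beta>} \<Longrightarrow> snd (\<gamma> t) = snd (\<gamma> \<alpha>) + sgn ly * sx * (fst (\<gamma> \<alpha>) * (t - \<alpha>) + \<sigma> * (t - \<alpha>)^2 / 2)"
proof -
  obtain \<sigma> sx where \<sigma>: "\<sigma> \<in> {-1,1}" and sx: "sx \<in> {-1,1}"
    and pos: "\<And>t. t \<in> {\<alpha><..<\<beta>} \<Longrightarrow> 0 < \<sigma> * fst (lam t) \<and> 0 < sx * fst (\<gamma> t)"
    using regular_arc_signs[OF ab reg] by metis
  have sub: "{\<alpha>..\<beta>} \<subseteq> {0..T}" using ab by auto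
  have cont: "continuous_on {\<alpha>..\<beta>} (\<lambda>t. \<sigma> * fst (lam t))" "continuous_on {\<alpha>..\<beta>} (\<lambda>t. sx * fst (\<gamma> t))"
    by (intro continuous_on_mult_left continuous_on_subset[OF continuous_lx sub]
        continuous_on_subset[OF continuous_x sub])+
  have "0 \<le> \<sigma> * fst (lam t)" "0 \<le> sx * fst (\<gamma> t)" if "t \<in> {\<alpha>..\<beta>}" for t
    using continuous_on_closed_interval_nonneg[OF cont(1) ab(2) _ that]
      continuous_on_closed_interval_nonneg[OF cont(2) ab(2) _ that] pos by (simp_all add: less_imp_le)
  with that[OF \<sigma> sx] pos regular_arc_dynamics[OF ab \<sigma> sx pos] show thesis by blast
qed

lemma sign_eq_of_pos_mult:
  fixes \<sigma> \<tau> d :: real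
  assumes "\<sigma> \<in> {-1,1}" "\<tau> \<in> {-1,1}" "0 < \<tau> * (\<sigma> * d)" "0 < d"
  shows "\<tau> = \<sigma>"
  using assms by (auto simp: zero_less_mult_iff)

lemma arc_from_axis:
  assumes ab: "0 \<le> \<alpha>" "\<alpha> < \<beta>" "\<beta> \<le> T" and reg: "\<And>t. t \<in> {\<alpha><..<\<beta>} \<Longrightarrow> \<not> switch_time t"
    and x0: "fst (\<gamma> \<alpha>) = 0"
  obtains \<sigma> where "\<sigma> \<in> {-1,1}" "fst (lam \<alpha>) = \<sigma> * K" "fst (\<gamma> \<beta>) = \<sigma> * (\<beta> - \<alpha>)"
    "fst (lam \<beta>) = \<sigma> * (K - \<bar>ly\<bar> * (\<beta> - \<alpha>))" "snd (\<gamma> \<beta>) = snd (\<gamma> \<alpha>) + sgn ly * (\<beta> - \<alpha>)^2 / 2"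
proof -
  obtain \<sigma> sx where \<sigma>: "\<sigma> \<in> {-1,1}" and sx: "sx \<in> {-1,1}"
    and pos: "\<And>t. t \<in> {\<alpha><..<\<beta>} \<Longrightarrow> 0 < \<sigma> * fst (lam t) \<and> 0 < sx * fst (\<gamma> t)"
    and nonneg: "\<And>t. t \<in> {\<alpha>..\<beta>} \<Longrightarrow> 0 \<le> \<sigma> * fst (lam t) \<and> 0 \<le> sx * fst (\<gamma> t)"
    and x: "\<And>t. t \<in> {\<alpha>..\<beta>} \<Longrightarrow> fst (\<gamma> t) = fst (\<gamma> \<alpha>) + \<sigma> * (t - \<alpha>)"
    and lx: "\<And>t. t \<in> {\<alpha>..\<beta>} \<Longrightarrow> fst (lam t) = fst (lam \<alpha>) - \<bar>ly\<bar> * sx * (t - \<alpha>)"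
    and y: "\<And>t. t \<in> {\<alpha>..\<beta>} \<Longrightarrow> snd (\<gamma> t) = snd (\<gamma> \<alpha>) + sgn ly * sx * (fst (\<gamma> \<alpha>) * (t - \<alpha>) + \<sigma> * (t - \<alpha>)^2 / 2)"
    using regular_arc[OF ab reg] by metis
  define m where "m = (\<alpha> + \<beta>) / 2"
  have m: "m \<in> {\<alpha><..<\<beta>}" "m \<in> {\<alpha>..\<beta>}" using ab by (auto simp: m_def)
  have "sx = \<sigma>"
    using sign_eq_of_pos_mult[OF \<sigma> sx, of "m - \<alpha>"] pos[OF m(1)] x[OF m(2)] x0 m by simp
  moreover have "fst (lam \<alpha>) = \<sigma> * K"
    using hamiltonian_const[of \<alpha>] nonneg[of \<alpha>] x0 ab \<sigma> by auto
  ultimately show thesis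
  proof (intro that[OF \<sigma>])
    show "fst (\<gamma> \<beta>) = \<sigma> * (\<beta> - \<alpha>)" using x[of \<beta>] x0 ab by simp
    show "fst (lam \<beta>) = \<sigma> * (K - \<bar>ly\<bar> * (\<beta> - \<alpha>))" if "sx = \<sigma>" "fst (lam \<alpha>) = \<sigma> * K"
      using lx[of \<beta>] that ab by (simp add: algebra_simps)
    show "snd (\<gamma> \<beta>) = snd (\<gamma> \<alpha>) + sgn ly * (\<beta> - \<alpha>)^2 / 2" if "sx = \<sigma>"
      using y[of \<beta>] that x0 ab \<sigma> by auto
  qed
qed

lemma arc_from_axis_to_switch:
  assumes ab: "0 \<le> \<alpha>" "\<alpha> < \<beta>" "\<beta> \<le> T" and reg: "\<And>t. t \<in> {\<alpha><..<\<beta>} \<Longrightarrow> \<not> switch_time t"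
    and x0: "fst (\<gamma> \<alpha>) = 0" and sw: "switch_time \<beta>"
  obtains \<sigma> where "\<sigma> \<in> {-1,1}" "\<beta> = \<alpha> + arc_time" "fst (lam \<alpha>) = \<sigma> * K" "fst (lam \<beta>) = 0"
    "fst (\<gamma> \<beta>) = \<sigma> * arc_time" "snd (\<gamma> \<beta>) = snd (\<gamma> \<alpha>) + sgn ly * arc_time^2 / 2"
proof -
  obtain \<sigma> where \<sigma>: "\<sigma> \<in> {-1,1}" and lx0: "fst (lam \<alpha>) = \<sigma> * K" and x1: "fst (\<gamma> \<beta>) = \<sigma> * (\<beta> - \<alpha>)"
    and lx1: "fst (lam \<beta>) = \<sigma> * (K - \<bar>ly\<bar> * (\<beta> - \<alpha>))"
    and y1: "snd (\<gamma> \<beta>) = snd (\<gamma> \<alpha>) + sgn ly * (\<beta> - \<alpha>)^2 / 2"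
    using arc_from_axis[OF ab reg x0] by metis
  have "fst (lam \<beta>) = 0" using sw x1 \<sigma> ab by (auto simp: switch_time_def)
  then have "\<beta> - \<alpha> = arc_time"
    using lx1 \<sigma> ly_arc_time ly_nonzero by (auto simp: right_diff_distrib[symmetric])
  with \<sigma> lx0 x1 y1 \<open>fst (lam \<beta>) = 0\<close> show thesis by (intro that) auto
qed

lemma arc_from_lx_zero_to_switch:
  assumes ab: "0 \<le> \<alpha>" "\<alpha> < \<beta>" "\<beta> \<le> T" and reg: "\<And>t. t \<in> {\<alpha><..<\<beta>} \<Longrightarrow> \<not> switch_time t"
    and lx0: "fst (lam \<alpha>) = 0" and sw: "switch_time \<beta>"
  obtains \<sigma> where "\<sigma> \<in> {-1,1}" "\<beta> = \<alpha> + arc_time" "fst (\<gamma> \<alpha>) = - \<sigma> * arc_time" "fst (\<gamma> \<beta>) = 0"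
    "fst (lam \<beta>) = \<sigma> * K" "snd (\<gamma> \<beta>) = snd (\<gamma> \<alpha>) + sgn ly * arc_time^2 / 2"
proof -
  obtain \<sigma> sx where \<sigma>: "\<sigma> \<in> {-1,1}" and sx: "sx \<in> {-1,1}"
    and pos: "\<And>t. t \<in> {\<alpha><..<\<beta>} \<Longrightarrow> 0 < \<sigma> * fst (lam t) \<and> 0 < sx * fst (\<gamma> t)"
    and nonneg: "\<And>t. t \<in> {\<alpha>..\<beta>} \<Longrightarrow> 0 \<le> \<sigma> * fst (lam t) \<and> 0 \<le> sx * fst (\<gamma> t)"
    and x: "\<And>t. t \<in> {\<alpha>..\<beta>} \<Longrightarrow> fst (\<gamma> t) = fst (\<gamma> \<alpha>) + \<sigma> * (t - \<alpha>)"
    and lx: "\<And>t. t \<in> {\<alpha>..\<beta>} \<Longrightarrow> fst (lam t) = fst (lam \<alpha>) - \<bar>ly\<bar> * sx * (t - \<alpha>)"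
    and y: "\<And>t. t \<in> {\<alpha>..\<beta>} \<Longrightarrow> snd (\<gamma> t) = snd (\<gamma> \<alpha>) + sgn ly * sx * (fst (\<gamma> \<alpha>) * (t - \<alpha>) + \<sigma> * (t - \<alpha>)^2 / 2)"
    using regular_arc[OF ab reg] by metis
  define m where "m = (\<alpha> + \<beta>) / 2"
  have m: "m \<in> {\<alpha><..<\<beta>}" "m \<in> {\<alpha>..\<beta>}" "0 < m - \<alpha>" "0 < \<beta> - m" using ab by (auto simp: m_def)
  have sx_eq: "sx = - \<sigma>"
    using sign_eq_of_pos_mult[of sx "-\<sigma>" "\<bar>ly\<bar> * (m - \<alpha>)"] sx \<sigma> pos[OF m(1)] lx[OF m(2)] lx0 m ly_nonzero
    by (auto simp: algebra_simps)
  have "\<bar>ly\<bar> * \<bar>fst (\<gamma> \<alpha>)\<bar> = \<bar>ly\<bar> * arc_time"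
    using hamiltonian_const[of \<alpha>] lx0 ab ly_arc_time by simp
  then have "\<bar>fst (\<gamma> \<alpha>)\<bar> = arc_time" using ly_nonzero by simp
  then have x0: "fst (\<gamma> \<alpha>) = - \<sigma> * arc_time"
    using nonneg[of \<alpha>] sx_eq \<sigma> ab arc_time_pos by (auto simp: abs_if split: if_splits)
  have "fst (lam \<beta>) \<noteq> 0" using lx[of \<beta>] lx0 sx ab ly_nonzero by auto
  then have x1: "fst (\<gamma> \<beta>) = 0" using sw by (simp add: switch_time_def)
  then have len: "\<beta> - \<alpha> = arc_time" using x[of \<beta>] x0 \<sigma> ab by (auto simp: algebra_simps)
  show thesis
  proof (rule that[OF \<sigma> _ x0 x1])
    show "\<beta> = \<alpha> + arc_time" using len by simp
    show "fst (lam \<beta>) = \<sigma> * K"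
      using lx[of \<beta>] lx0 len sx_eq ly_arc_time ab by (simp add: algebra_simps)
    show "snd (\<gamma> \<beta>) = snd (\<gamma> \<alpha>) + sgn ly * arc_time^2 / 2"
      using y[of \<beta>] x0 len sx_eq \<sigma> ab by (auto simp: power2_eq_square)
  qed
qed

lemma arc_to_lx_zero:
  assumes ab: "0 \<le> \<alpha>" "\<alpha> < \<beta>" "\<beta> \<le> T" and reg: "\<And>t. t \<in> {\<alpha><..<\<beta>} \<Longrightarrow> \<not> switch_time t"
    and lx1: "fst (lam \<beta>) = 0"
  obtains \<sigma> where "\<sigma> \<in> {-1,1}" "\<beta> - \<alpha> \<le> arc_time" "fst (\<gamma> \<alpha>) = \<sigma> * (arc_time - (\<beta> - \<alpha>))"
    "fst (\<gamma> \<beta>) = \<sigma> * arc_time"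
    "snd (\<gamma> \<beta>) = snd (\<gamma> \<alpha>) + sgn ly * \<sigma> * (fst (\<gamma> \<alpha>) * (\<beta> - \<alpha>) + \<sigma> * (\<beta> - \<alpha>)^2 / 2)"
proof -
  obtain \<sigma> sx where \<sigma>: "\<sigma> \<in> {-1,1}" and sx: "sx \<in> {-1,1}"
    and pos: "\<And>t. t \<in> {\<alpha><..<\<beta>} \<Longrightarrow> 0 < \<sigma> * fst (lam t) \<and> 0 < sx * fst (\<gamma> t)"
    and nonneg: "\<And>t. t \<in> {\<alpha>..\<beta>} \<Longrightarrow> 0 \<le> \<sigma> * fst (lam t) \<and> 0 \<le> sx * fst (\<gamma> t)"
    and x: "\<And>t. t \<in> {\<alpha>..\<beta>} \<Longrightarrow> fst (\<gamma> t) = fst (\<gamma> \<alpha>) + \<sigma> * (t - \<alpha>)"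
    and lx: "\<And>t. t \<in> {\<alpha>..\<beta>} \<Longrightarrow> fst (lam t) = fst (lam \<alpha>) - \<bar>ly\<bar> * sx * (t - \<alpha>)"
    and y: "\<And>t. t \<in> {\<alpha>..\<beta>} \<Longrightarrow> snd (\<gamma> t) = snd (\<gamma> \<alpha>) + sgn ly * sx * (fst (\<gamma> \<alpha>) * (t - \<alpha>) + \<sigma> * (t - \<alpha>)^2 / 2)"
    using regular_arc[OF ab reg] by metis
  define m where "m = (\<alpha> + \<beta>) / 2"
  have m: "m \<in> {\<alpha><..<\<beta>}" "m \<in> {\<alpha>..\<beta>}" "0 < m - \<alpha>" "0 < \<beta> - m" using ab by (auto simp: m_def)
  have "fst (lam m) = \<bar>ly\<bar> * sx * (\<beta> - m)" using lx[of \<beta>] lx[OF m(2)] lx1 ab by (simp add: algebra_simps)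
  then have "0 < \<sigma> * (sx * (\<bar>ly\<bar> * (\<beta> - m)))" using pos[OF m(1)] by (simp add: mult_ac)
  moreover have "0 < \<bar>ly\<bar> * (\<beta> - m)" using m ly_nonzero by simp
  ultimately have sx_eq: "sx = \<sigma>" by (metis sign_eq_of_pos_mult[OF sx \<sigma>])
  have "\<bar>ly\<bar> * \<bar>fst (\<gamma> \<beta>)\<bar> = \<bar>ly\<bar> * arc_time"
    using hamiltonian_const[of \<beta>] lx1 ab ly_arc_time by simp
  then have "\<bar>fst (\<gamma> \<beta>)\<bar> = arc_time" using ly_nonzero by simp
  then have x1: "fst (\<gamma> \<beta>) = \<sigma> * arc_time"
    using nonneg[of \<beta>] sx_eq \<sigma> ab arc_time_pos by (auto simp: abs_if split: if_splits)
  then have x0: "fst (\<gamma> \<alpha>) = \<sigma> * (arc_time - (\<beta> - \<alpha>))" using x[of \<beta>] ab by (simp add: algebra_simps)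
  show thesis
  proof (rule that[OF \<sigma> _ x0 x1])
    show "\<beta> - \<alpha> \<le> arc_time" using nonneg[of \<alpha>] x0 sx_eq \<sigma> ab by (auto simp: zero_le_mult_iff)
    show "snd (\<gamma> \<beta>) = snd (\<gamma> \<alpha>) + sgn ly * \<sigma> * (fst (\<gamma> \<alpha>) * (\<beta> - \<alpha>) + \<sigma> * (\<beta> - \<alpha>)^2 / 2)"
      using y[of \<beta>] sx_eq ab by simp
  qed
qed

lemma arc_to_axis:
  assumes ab: "0 \<le> \<alpha>" "\<alpha> < \<beta>" "\<beta> \<le> T" and reg: "\<And>t. t \<in> {\<alpha><..<\<beta>} \<Longrightarrow> \<not> switch_time t"
    and x1: "fst (\<gamma> \<beta>) = 0"
  obtains \<sigma> where "\<sigma> \<in> {-1,1}" "fst (\<gamma> \<alpha>) = - \<sigma> * (\<beta> - \<alpha>)" "fst (lam \<beta>) = \<sigma> * K"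
    "snd (\<gamma> \<beta>) = snd (\<gamma> \<alpha>) + sgn ly * (\<beta> - \<alpha>)^2 / 2"
proof -
  obtain \<sigma> sx where \<sigma>: "\<sigma> \<in> {-1,1}" and sx: "sx \<in> {-1,1}"
    and pos: "\<And>t. t \<in> {\<alpha><..<\<beta>} \<Longrightarrow> 0 < \<sigma> * fst (lam t) \<and> 0 < sx * fst (\<gamma> t)"
    and nonneg: "\<And>t. t \<in> {\<alpha>..\<beta>} \<Longrightarrow> 0 \<le> \<sigma> * fst (lam t) \<and> 0 \<le> sx * fst (\<gamma> t)"
    and x: "\<And>t. t \<in> {\<alpha>..\<beta>} \<Longrightarrow> fst (\<gamma> t) = fst (\<gamma> \<alpha>) + \<sigma> * (t - \<alpha>)"
    and lx: "\<And>t. t \<in> {\<alpha>..\<beta>} \<Longrightarrow> fst (lam t) = fst (lam \<alpha>) - \<bar>ly\<bar> * sx * (t - \<alpha>)"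
    and y: "\<And>t. t \<in> {\<alpha>..\<beta>} \<Longrightarrow> snd (\<gamma> t) = snd (\<gamma> \<alpha>) + sgn ly * sx * (fst (\<gamma> \<alpha>) * (t - \<alpha>) + \<sigma> * (t - \<alpha>)^2 / 2)"
    using regular_arc[OF ab reg] by metis
  define m where "m = (\<alpha> + \<beta>) / 2"
  have m: "m \<in> {\<alpha><..<\<beta>}" "m \<in> {\<alpha>..\<beta>}" "0 < m - \<alpha>" "0 < \<beta> - m" using ab by (auto simp: m_def)
  have x0: "fst (\<gamma> \<alpha>) = - \<sigma> * (\<beta> - \<alpha>)" using x[of \<beta>] x1 ab by (simp add: algebra_simps)
  then have "fst (\<gamma> m) = - \<sigma> * (\<beta> - m)" using x[OF m(2)] by (simp add: algebra_simps)
  then have sx_eq: "sx = - \<sigma>"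
    using sign_eq_of_pos_mult[of "-\<sigma>" sx "\<beta> - m"] sx \<sigma> pos[OF m(1)] m by auto
  show thesis
  proof (rule that[OF \<sigma> x0])
    show "fst (lam \<beta>) = \<sigma> * K"
      using hamiltonian_const[of \<beta>] nonneg[of \<beta>] x1 ab \<sigma> by auto
    show "snd (\<gamma> \<beta>) = snd (\<gamma> \<alpha>) + sgn ly * (\<beta> - \<alpha>)^2 / 2"
      using y[of \<beta>] x0 sx_eq \<sigma> ab by (auto simp: power2_eq_square)
  qed
qed

end

section \<open>Competing trajectories\<close>

lemma measurable_on_shift:
  fixes f :: "real \<Rightarrow> 'b::real_normed_vector"
  assumes "f measurable_on S"
  shows "(\<lambda>t. f (t + c)) measurable_on ((\<lambda>t. t - c) ` S)"
proof -
  obtain N g where N: "negligible N" and g: "\<And>n. continuous_on UNIV (g n)"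
    and lim: "\<And>x. x \<notin> N \<Longrightarrow> (\<lambda>n. g n x) \<longlonglongrightarrow> (if x \<in> S then f x else 0)"
    using assms unfolding measurable_on_def by blast
  show ?thesis unfolding measurable_on_def
  proof (intro exI conjI allI impI)
    show "negligible ((+) (-c) ` N)" using negligible_translation[OF N] .
    show "continuous_on UNIV (\<lambda>t. g n (t + c))" for n
      by (rule continuous_on_compose2[OF g[of n]]) (auto intro: continuous_intros)
    fix x assume "x \<notin> (+) (-c) ` N"
    then have "x + c \<notin> N" by (metis add.commute add_uminus_conv_diff diff_add_cancel image_eqI)
    moreover have "x \<in> (\<lambda>t. t - c) ` S \<longleftrightarrow> x + c \<in> S" by (auto simp: image_iff) (metis add_diff_cancel)
    ultimately show "(\<lambda>n. g n (x + c)) \<longlonglongrightarrow> (if x \<in> (\<lambda>t. t - c) ` S then f (x + c) else 0)"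
      using lim[of "x + c"] by simp
  qed
qed

lemma measurable_on_subset:
  fixes f :: "real \<Rightarrow> 'b::real_normed_vector"
  assumes f: "f measurable_on S" and sub: "T \<subseteq> S" and T: "T \<in> sets lebesgue"
  shows "f measurable_on T"
proof -
  have "(\<lambda>x. if x \<in> S then f x else 0) measurable_on UNIV" using f by (simp add: measurable_on_UNIV)
  from measurable_on_restrict[OF this T]
  have "(\<lambda>x. if x \<in> T then (if x \<in> S then f x else 0) else 0) measurable_on UNIV" .
  moreover have "(\<lambda>x. if x \<in> T then (if x \<in> S then f x else 0) else 0) = (\<lambda>x. if x \<in> T then f x else 0)"
    using sub by (auto simp: fun_eq_iff)
  ultimately show ?thesis by (simp add: measurable_on_UNIV)
qed

lemma has_vector_derivative_shift:
  assumes "(f has_vector_derivative v) (at (t + c) within S)"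
  shows "((\<lambda>s. f (s + c)) has_vector_derivative v) (at t within ((\<lambda>s. s - c) ` S))"
proof -
  have i: "((\<lambda>s. s + c) has_vector_derivative 1) (at t within ((\<lambda>s. s - c) ` S))"
    by (auto intro!: derivative_eq_intros)
  have im: "(\<lambda>s. s + c) ` ((\<lambda>s. s - c) ` S) = S" by (auto simp: image_iff)
  from vector_diff_chain_within[OF i, of f v] assms show ?thesis by (simp add: im o_def)
qed

lemma admissible_shift:
  assumes adm: "admissible T \<gamma> u" and s: "0 \<le> s" "s \<le> T"
  shows "admissible (T - s) (\<lambda>t. \<gamma> (t + s)) (\<lambda>t. u (t + s))"
proof -
  have im: "(\<lambda>t. t - s) ` {s..T} = {0..T - s}" by simp
  obtain N where N: "negligible N" and adm_at: "\<And>t. t \<in> {0..T} - N \<Longrightarrow> admissible_at T \<gamma> u t"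
    and ac: "abs_cont_on {0..T} \<gamma>" and ms: "u measurable_on {0..T}"
    using adm by (auto simp: admissible_iff)
  have "admissible_at (T - s) (\<lambda>t. \<gamma> (t + s)) (\<lambda>t. u (t + s)) t"
    if t: "t \<in> {0..T - s} - (+) (-s) ` N" for t
  proof -
    have "t + s \<notin> N" using t by (metis DiffD2 add.commute add_uminus_conv_diff add_diff_cancel image_eqI)
    then have "t + s \<in> {0..T} - N" using t s by auto
    then have "(\<bar>fst (u (t + s))\<bar> \<le> 1 \<and> \<bar>snd (u (t + s))\<bar> \<le> 1) \<and>
        (\<gamma> has_vector_derivative (fst (u (t + s)), snd (u (t + s)) * fst (\<gamma> (t + s)))) (at (t + s) within {s..T})"
      using adm_at has_vector_derivative_within_subset[of \<gamma> _ "t + s" "{0..T}" "{s..T}"] s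
      by (auto simp: admissible_at_def)
    with has_vector_derivative_shift[of \<gamma> _ t s "{s..T}"] show ?thesis
      unfolding im by (simp add: admissible_at_def)
  qed
  moreover have "abs_cont_on {0..T - s} (\<lambda>t. \<gamma> (t + s))"
    using abs_cont_on_shift[OF abs_cont_on_subset[OF ac, of "{s..T}"], of s] s by simp
  moreover have "(\<lambda>t. u (t + s)) measurable_on {0..T - s}"
    using measurable_on_shift[OF measurable_on_subset[OF ms, of "{s..T}"], of s] s im by auto
  ultimately show ?thesis
    using s negligible_translation[OF N, of "-s"] unfolding admissible_iff by (intro conjI exI) auto
qed

lemma abs_cont_on_concat:
  assumes f: "abs_cont_on {0..T1} f" and g: "abs_cont_on {0..T2} g" and j: "f T1 = g 0"
    and T: "0 \<le> T1" "0 \<le> T2"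
  shows "abs_cont_on {0..T1 + T2} (\<lambda>t. if t \<le> T1 then f t else g (t - T1))"
proof (rule abs_cont_on_join[of 0 T1])
  show "abs_cont_on {0..T1} (\<lambda>t. if t \<le> T1 then f t else g (t - T1))"
    by (rule abs_cont_on_cong[OF f]) auto
  have "abs_cont_on {T1..T1 + T2} (\<lambda>t. g (t + - T1))"
    using abs_cont_on_shift[OF g, of "- T1"] by (simp add: add.commute)
  then show "abs_cont_on {T1..T1 + T2} (\<lambda>t. if t \<le> T1 then f t else g (t - T1))"
    by (rule abs_cont_on_cong) (use j in \<open>auto simp: antisym\<close>)
qed (use T in auto)

lemma measurable_on_concat:
  fixes f g :: "real \<Rightarrow> 'b::real_normed_vector"
  assumes f: "f measurable_on {0..T1}" and g: "g measurable_on {0..T2}" and T: "0 \<le> T1" "0 \<le> T2"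
  shows "(\<lambda>t. if t \<le> T1 then f t else g (t - T1)) measurable_on {0..T1 + T2}"
proof -
  have "(\<lambda>t. g (t + - T1)) measurable_on {T1..T1 + T2}"
    using measurable_on_shift[OF g, of "- T1"] by (simp add: add.commute)
  then have "(\<lambda>t. g (t + - T1)) measurable_on {T1<..T1 + T2}" by (rule measurable_on_subset) auto
  then have "(\<lambda>t. (if t \<in> {0..T1} then f t else 0) + (if t \<in> {T1<..T1 + T2} then g (t + - T1) else 0))
      measurable_on UNIV"
    using measurable_on_add[OF f[THEN measurable_on_UNIV[THEN iffD2]] measurable_on_UNIV[THEN iffD2]]
    by blast
  moreover have "(\<lambda>t. (if t \<in> {0..T1} then f t else 0) + (if t \<in> {T1<..T1 + T2} then g (t + - T1) else 0))
      = (\<lambda>t. if t \<in> {0..T1 + T2} then (if t \<le> T1 then f t else g (t - T1)) else 0)"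
    using T by (auto simp: fun_eq_iff)
  ultimately show ?thesis by (simp only: measurable_on_UNIV)
qed

lemma admissible_at_concat_left:
  assumes adm: "admissible_at T1 \<gamma>1 u1 t" and t: "0 \<le> t" "t < T1" and T2: "0 \<le> T2"
  shows "admissible_at (T1 + T2) (\<lambda>t. if t \<le> T1 then \<gamma>1 t else \<gamma>2 (t - T1))
    (\<lambda>t. if t \<le> T1 then u1 t else u2 (t - T1)) t"
proof -
  let ?G = "\<lambda>t. if t \<le> T1 then \<gamma>1 t else \<gamma>2 (t - T1)"
  have "at t within {0..T1 + T2} = at t within {0..T1}"
    by (rule at_within_nhd[of _ "{..<T1}"]) (use t T2 in auto)
  moreover have "(?G has_vector_derivative (fst (u1 t), snd (u1 t) * fst (\<gamma>1 t))) (at t within {0..T1})"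
    by (rule has_vector_derivative_transform[of t "{0..T1}" ?G \<gamma>1])
      (use adm t in \<open>auto simp: admissible_at_def\<close>)
  ultimately show ?thesis using adm t by (simp add: admissible_at_def)
qed

lemma admissible_at_concat_right:
  assumes adm: "admissible_at T2 \<gamma>2 u2 (t - T1)" and t: "T1 < t" "t \<le> T1 + T2" and T1: "0 \<le> T1"
    and j: "\<gamma>1 T1 = \<gamma>2 0"
  shows "admissible_at (T1 + T2) (\<lambda>t. if t \<le> T1 then \<gamma>1 t else \<gamma>2 (t - T1))
    (\<lambda>t. if t \<le> T1 then u1 t else u2 (t - T1)) t"
proof -
  let ?G = "\<lambda>t. if t \<le> T1 then \<gamma>1 t else \<gamma>2 (t - T1)"
  let ?v = "(fst (u2 (t - T1)), snd (u2 (t - T1)) * fst (\<gamma>2 (t - T1)))"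
  have "(\<gamma>2 has_vector_derivative ?v) (at (t + - T1) within {0..T2})"
    using adm by (simp add: admissible_at_def)
  from has_vector_derivative_shift[OF this]
  have d: "((\<lambda>s. \<gamma>2 (s + - T1)) has_vector_derivative ?v) (at t within {T1..T1 + T2})"
    by (simp add: add.commute)
  have "?G s = \<gamma>2 (s + - T1)" if "s \<in> {T1..T1 + T2}" for s
    using that j by (cases "s = T1") auto
  then have "(?G has_vector_derivative ?v) (at t within {T1..T1 + T2})"
    using t by (intro has_vector_derivative_transform[OF _ _ d]) auto
  moreover have "at t within {0..T1 + T2} = at t within {T1..T1 + T2}"
    by (rule at_within_nhd[of _ "{T1<..}"]) (use t T1 in auto)
  ultimately show ?thesis using adm t by (simp add: admissible_at_def)
qed

lemma admissible_concat:
  assumes adm1: "admissible T1 \<gamma>1 u1" and adm2: "admissible T2 \<gamma>2 u2" and j: "\<gamma>1 T1 = \<gamma>2 0"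
  shows "admissible (T1 + T2) (\<lambda>t. if t \<le> T1 then \<gamma>1 t else \<gamma>2 (t - T1))
    (\<lambda>t. if t \<le> T1 then u1 t else u2 (t - T1))"
proof -
  obtain N1 where T1: "0 \<le> T1" and ac1: "abs_cont_on {0..T1} \<gamma>1" and ms1: "u1 measurable_on {0..T1}"
    and N1: "negligible N1" and adm_at1: "\<And>t. t \<in> {0..T1} - N1 \<Longrightarrow> admissible_at T1 \<gamma>1 u1 t"
    using adm1 by (auto simp: admissible_iff)
  obtain N2 where T2: "0 \<le> T2" and ac2: "abs_cont_on {0..T2} \<gamma>2" and ms2: "u2 measurable_on {0..T2}"
    and N2: "negligible N2" and adm_at2: "\<And>t. t \<in> {0..T2} - N2 \<Longrightarrow> admissible_at T2 \<gamma>2 u2 t"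
    using adm2 by (auto simp: admissible_iff)
  define N where "N = N1 \<union> (+) T1 ` N2 \<union> {T1}"
  have "negligible N" unfolding N_def using N1 negligible_translation[OF N2] by auto
  moreover have "admissible_at (T1 + T2) (\<lambda>t. if t \<le> T1 then \<gamma>1 t else \<gamma>2 (t - T1))
      (\<lambda>t. if t \<le> T1 then u1 t else u2 (t - T1)) t" if t: "t \<in> {0..T1 + T2} - N" for t
  proof (cases "t < T1")
    case True
    with t adm_at1 show ?thesis by (intro admissible_at_concat_left T2) (auto simp: N_def)
  next
    case False
    then have tT: "T1 < t" using t by (auto simp: N_def)
    have "t - T1 \<notin> N2"
    proof
      assume "t - T1 \<in> N2"
      then have "T1 + (t - T1) \<in> (+) T1 ` N2" by (rule imageI)
      with t show False by (simp add: N_def)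
    qed
    with t tT have "admissible_at T2 \<gamma>2 u2 (t - T1)" by (intro adm_at2) auto
    with tT t T1 j show ?thesis by (intro admissible_at_concat_right) auto
  qed
  ultimately show ?thesis
    unfolding admissible_iff using abs_cont_on_concat[OF ac1 ac2 j T1 T2] measurable_on_concat[OF ms1 ms2 T1 T2] T1 T2
    by (intro conjI exI[of _ N]) auto
qed

definition half_signed_square :: "real \<Rightarrow> real" where "half_signed_square v = v * \<bar>v\<bar> / 2"

lemma half_signed_square_has_real_derivative: "(half_signed_square has_real_derivative \<bar>x\<bar>) (at x)"
proof -
  consider "x = 0" | "x > 0" | "x < 0" by linarith
  then show ?thesis
  proof cases
    case 1
    have "((\<lambda>y. \<bar>y\<bar> / 2) \<longlongrightarrow> \<bar>0\<bar> / 2) (at (0::real))"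
      by (intro tendsto_intros) simp
    then have "((\<lambda>y. \<bar>y\<bar> / 2) \<longlongrightarrow> 0) (at (0::real))" by simp
    then have "((\<lambda>y. (half_signed_square y - half_signed_square 0) / (y - 0)) \<longlongrightarrow> 0) (at (0::real))"
      by (rule Lim_transform_within[OF _ zero_less_one]) (auto simp: half_signed_square_def)
    then show ?thesis using 1 by (simp add: has_field_derivative_iff)
  next
    case 2
    have d: "((\<lambda>v. v^2 / 2) has_real_derivative x) (at x)"
      by (auto intro!: derivative_eq_intros)
    show ?thesis
      by (rule has_field_derivative_transform_within_open[OF _ open_greaterThan[of 0]])
        (use d 2 in \<open>auto simp: half_signed_square_def power2_eq_square\<close>)
  next
    case 3
    have d: "((\<lambda>v. - (v^2 / 2)) has_real_derivative -x) (at x)"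
      by (auto intro!: derivative_eq_intros)
    show ?thesis
      by (rule has_field_derivative_transform_within_open[OF _ open_lessThan[of 0]])
        (use d 3 in \<open>auto simp: half_signed_square_def power2_eq_square\<close>)
  qed
qed

lemma half_signed_square_chain [derivative_intros]:
  "(f has_real_derivative f') (at x within S) \<Longrightarrow>
    ((\<lambda>x. half_signed_square (f x)) has_real_derivative (\<bar>f x\<bar> * f')) (at x within S)"
  by (rule DERIV_chain2[OF half_signed_square_has_real_derivative])

lemma half_signed_square_sgn_mult:
  "\<sigma> \<in> {-1,1} \<Longrightarrow> 0 \<le> v \<Longrightarrow> half_signed_square (\<sigma> * v) = \<sigma> * v^2 / 2"
  by (auto simp: half_signed_square_def power2_eq_square abs_mult)

lemma straight_leg_has_vector_derivative:
  assumes \<rho>: "\<rho> \<in> {-1,1}"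
  shows "((\<lambda>t. (x0 + \<rho> * t, y0 + s * \<rho> * (half_signed_square (x0 + \<rho> * t) - half_signed_square x0)))
    has_vector_derivative (\<rho>, s * \<bar>x0 + \<rho> * t\<bar>)) (at t within S)"
proof -
  have dx: "((\<lambda>t. x0 + \<rho> * t) has_real_derivative \<rho>) (at t within S)"
    by (auto intro!: derivative_eq_intros)
  have "((\<lambda>t. y0 + s * \<rho> * (half_signed_square (x0 + \<rho> * t) - half_signed_square x0)) has_real_derivative
      0 + s * \<rho> * (\<bar>x0 + \<rho> * t\<bar> * \<rho> - 0)) (at t within S)"
    by (intro DERIV_add DERIV_const DERIV_cmult DERIV_diff half_signed_square_chain dx)
  moreover have "0 + s * \<rho> * (\<bar>x0 + \<rho> * t\<bar> * \<rho> - 0) = s * \<bar>x0 + \<rho> * t\<bar>"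
    using \<rho> by auto
  ultimately have "((\<lambda>t. y0 + s * \<rho> * (half_signed_square (x0 + \<rho> * t) - half_signed_square x0))
      has_real_derivative s * \<bar>x0 + \<rho> * t\<bar>) (at t within S)"
    by metis
  with dx show ?thesis
    unfolding has_real_derivative_iff_has_vector_derivative by (rule has_vector_derivative_Pair)
qed

lemma straight_leg_lipschitz:
  assumes \<rho>: "\<rho> \<in> {-1,1}" and s: "\<bar>s\<bar> \<le> 1" and \<tau>: "0 \<le> \<tau>"
  shows "(1 + (\<bar>x0\<bar> + \<tau>))-lipschitz_on {0..\<tau>}
    (\<lambda>t. (x0 + \<rho> * t, y0 + s * \<rho> * (half_signed_square (x0 + \<rho> * t) - half_signed_square x0)))"
    (is "_-lipschitz_on _ ?g")
proof (rule lipschitz_onI)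
  show "0 \<le> 1 + (\<bar>x0\<bar> + \<tau>)" using \<tau> by simp
  fix a b assume a: "a \<in> {0..\<tau>}" and b: "b \<in> {0..\<tau>}"
  have bx: "\<bar>fst (?g a - ?g b)\<bar> \<le> 1 * \<bar>a - b\<bar>"
    using \<rho> by (auto simp: abs_mult right_diff_distrib[symmetric])
  have "norm (snd (?g a) - snd (?g b)) \<le> (\<bar>x0\<bar> + \<tau>) * norm (a - b)"
  proof (rule field_differentiable_bound[OF convex_real_interval(5) _ _ a b])
    fix z assume z: "z \<in> {0..\<tau>}"
    show "((\<lambda>t. snd (?g t)) has_field_derivative s * \<bar>x0 + \<rho> * z\<bar>) (at z within {0..\<tau>})"
      using straight_leg_has_vector_derivative[OF \<rho>, THEN has_vector_derivative_snd]
      by (simp add: has_real_derivative_iff_has_vector_derivative)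
    have "\<bar>x0 + \<rho> * z\<bar> \<le> \<bar>x0\<bar> + \<tau>"
      using z \<rho> abs_triangle_ineq[of x0 "\<rho> * z"] by (auto simp: abs_mult)
    then show "norm (s * \<bar>x0 + \<rho> * z\<bar>) \<le> \<bar>x0\<bar> + \<tau>"
      using s by (simp add: abs_mult) (metis abs_ge_zero mult_le_one mult_mono order_trans mult_1 mult.commute)
  qed
  then have by': "\<bar>snd (?g a - ?g b)\<bar> \<le> (\<bar>x0\<bar> + \<tau>) * \<bar>a - b\<bar>" by simp
  have "norm (?g a - ?g b) \<le> norm (fst (?g a - ?g b)) + norm (snd (?g a - ?g b))"
    by (metis norm_Pair_le prod.collapse)
  also have "\<dots> \<le> 1 * \<bar>a - b\<bar> + (\<bar>x0\<bar> + \<tau>) * \<bar>a - b\<bar>"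
    using bx by' by simp
  finally show "dist (?g a) (?g b) \<le> (1 + (\<bar>x0\<bar> + \<tau>)) * dist a b"
    by (simp add: dist_norm dist_real_def algebra_simps)
qed

text \<open>Moving with \<open>u\<^sub>1 = \<rho>\<close> and \<open>u\<^sub>2 = s sgn x\<close> gives \<open>y' = s \<bar>x\<bar>\<close>, which \<open>half_signed_square\<close> integrates.\<close>

lemma admissible_straight_leg:
  assumes \<rho>: "\<rho> \<in> {-1,1}" and s: "\<bar>s\<bar> \<le> 1" and \<tau>: "0 \<le> \<tau>"
  shows "admissible \<tau> (\<lambda>t. (x0 + \<rho> * t, y0 + s * \<rho> * (half_signed_square (x0 + \<rho> * t) - half_signed_square x0)))
    (\<lambda>t. (\<rho>, s * sgn (x0 + \<rho> * t)))"
proof -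
  have "(\<lambda>t. (\<rho>, s * sgn (x0 + \<rho> * t))) measurable_on {0..\<tau>}"
  proof -
    have [measurable]: "(\<lambda>x::real. x) \<in> borel_measurable (lebesgue_on {0..\<tau>})"
      by (rule continuous_imp_measurable_on_sets_lebesgue) (auto intro: continuous_intros)
    show ?thesis
      by (subst measurable_on_iff_borel_measurable) (simp, measurable)
  qed
  moreover have "admissible_at \<tau> (\<lambda>t. (x0 + \<rho> * t, y0 + s * \<rho> * (half_signed_square (x0 + \<rho> * t) - half_signed_square x0)))
      (\<lambda>t. (\<rho>, s * sgn (x0 + \<rho> * t))) t" for t
  proof -
    have eq: "s * sgn (x0 + \<rho> * t) * (x0 + \<rho> * t) = s * \<bar>x0 + \<rho> * t\<bar>"
      by (simp add: abs_sgn mult.assoc mult.commute)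
    have "\<bar>s * sgn (x0 + \<rho> * t)\<bar> \<le> 1" "\<bar>\<rho>\<bar> \<le> 1"
      using s \<rho> by (auto simp: abs_mult sgn_real_def)
    then show ?thesis
      unfolding admissible_at_def prod.sel eq using straight_leg_has_vector_derivative[OF \<rho>] by blast
  qed
  ultimately show ?thesis
    unfolding admissible_iff using \<tau> lipschitz_imp_abs_cont_on[OF straight_leg_lipschitz[OF \<rho> s \<tau>]]
    by (intro conjI exI[of _ "{}"]) auto
qed

lemma admissible_two_legs:
  assumes \<rho>: "\<rho> \<in> {-1,1}" and s: "\<bar>s\<bar> \<le> 1" and \<tau>: "0 \<le> \<tau>1" "0 \<le> \<tau>2"
  obtains \<gamma> u where "admissible (\<tau>1 + \<tau>2) \<gamma> u" "\<gamma> 0 = (x0, y0)"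
    "\<gamma> (\<tau>1 + \<tau>2) = (x0 + \<rho> * (\<tau>1 - \<tau>2), y0 + s * \<rho> * (2 * half_signed_square (x0 + \<rho> * \<tau>1)
      - half_signed_square x0 - half_signed_square (x0 + \<rho> * (\<tau>1 - \<tau>2))))"
proof -
  define x1 where "x1 = x0 + \<rho> * \<tau>1"
  define y1 where "y1 = y0 + s * \<rho> * (half_signed_square x1 - half_signed_square x0)"
  define g1 where "g1 = (\<lambda>t. (x0 + \<rho> * t, y0 + s * \<rho> * (half_signed_square (x0 + \<rho> * t) - half_signed_square x0)))"
  define g2 where "g2 = (\<lambda>t. (x1 + (-\<rho>) * t, y1 + s * (-\<rho>) * (half_signed_square (x1 + (-\<rho>) * t) - half_signed_square x1)))"
  have "-\<rho> \<in> {-1,1}" using \<rho> by auto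
  have "admissible \<tau>1 g1 (\<lambda>t. (\<rho>, s * sgn (x0 + \<rho> * t)))"
    unfolding g1_def by (rule admissible_straight_leg[OF \<rho> s \<tau>(1)])
  moreover have "admissible \<tau>2 g2 (\<lambda>t. (-\<rho>, s * sgn (x1 + (-\<rho>) * t)))"
    unfolding g2_def by (rule admissible_straight_leg[OF \<open>-\<rho> \<in> {-1,1}\<close> s \<tau>(2)])
  moreover have "g1 \<tau>1 = g2 0" by (simp add: g1_def g2_def x1_def y1_def)
  ultimately have adm: "admissible (\<tau>1 + \<tau>2) (\<lambda>t. if t \<le> \<tau>1 then g1 t else g2 (t - \<tau>1))
      (\<lambda>t. if t \<le> \<tau>1 then (\<rho>, s * sgn (x0 + \<rho> * t)) else (-\<rho>, s * sgn (x1 + (-\<rho>) * (t - \<tau>1))))"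
    by (rule admissible_concat)
  have start: "(if (0::real) \<le> \<tau>1 then g1 0 else g2 (0 - \<tau>1)) = (x0, y0)"
    using \<tau> by (simp add: g1_def)
  have "g2 \<tau>2 = (x0 + \<rho> * (\<tau>1 - \<tau>2), y0 + s * \<rho> * (2 * half_signed_square (x0 + \<rho> * \<tau>1)
      - half_signed_square x0 - half_signed_square (x0 + \<rho> * (\<tau>1 - \<tau>2))))"
    by (simp add: g2_def x1_def y1_def algebra_simps)
  moreover have "(if \<tau>1 + \<tau>2 \<le> \<tau>1 then g1 (\<tau>1 + \<tau>2) else g2 (\<tau>1 + \<tau>2 - \<tau>1)) = g2 \<tau>2"
    using \<tau> \<open>g1 \<tau>1 = g2 0\<close> by auto
  ultimately show thesis by (intro that[OF adm start]) simp
qed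

lemma shortcut_not_time_minimizer:
  assumes adm: "admissible T \<gamma> u" and z: "0 \<le> z" "z \<le> T" and \<tau>: "\<tau> < z"
    and adm': "admissible \<tau> \<gamma>' u'" and start: "\<gamma>' 0 = \<gamma> 0" and meet: "\<gamma>' \<tau> = \<gamma> z"
  shows "\<not> time_minimizer T \<gamma>"
proof -
  have "admissible (T - z) (\<lambda>t. \<gamma> (t + z)) (\<lambda>t. u (t + z))" by (rule admissible_shift[OF adm z])
  with adm' have "admissible (\<tau> + (T - z)) (\<lambda>t. if t \<le> \<tau> then \<gamma>' t else \<gamma> (t - \<tau> + z))
      (\<lambda>t. if t \<le> \<tau> then u' t else u (t - \<tau> + z))"
    by (rule admissible_concat) (simp add: meet)
  moreover have "0 \<le> \<tau>" using adm' by (simp add: admissible_def)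
  ultimately show ?thesis
    unfolding time_minimizer_def using \<tau> start meet z
    by (intro notI) (erule notE, rule exI[of _ "\<tau> + (T - z)"], auto)
qed

lemma two_leg_shortcut_not_time_minimizer:
  assumes \<rho>: "\<rho> \<in> {-1,1}" and s: "\<bar>s\<bar> \<le> 1" and \<tau>: "0 \<le> \<tau>1" "0 \<le> \<tau>2"
    and adm: "admissible T \<gamma> u" and z: "0 \<le> z" "z \<le> T" and faster: "\<tau>1 + \<tau>2 < z"
    and start: "\<gamma> 0 = (x0, y0)"
    and meet: "\<gamma> z = (x0 + \<rho> * (\<tau>1 - \<tau>2), y0 + s * \<rho> * (2 * half_signed_square (x0 + \<rho> * \<tau>1)
      - half_signed_square x0 - half_signed_square (x0 + \<rho> * (\<tau>1 - \<tau>2))))"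
  shows "\<not> time_minimizer T \<gamma>"
proof -
  obtain \<gamma>' u' where "admissible (\<tau>1 + \<tau>2) \<gamma>' u'" "\<gamma>' 0 = \<gamma> 0" "\<gamma>' (\<tau>1 + \<tau>2) = \<gamma> z"
    using admissible_two_legs[OF \<rho> s \<tau>, of x0 y0] start meet by metis
  then show ?thesis by (rule shortcut_not_time_minimizer[OF adm z faster])
qed

section \<open>Three switchings are never optimal\<close>

lemma shortcut_time_bound_three_arcs:
  fixes a e :: real
  assumes "0 \<le> e" "e < a"
  shows "(sqrt (2 * a^2 - e^2))^2 = 2 * a^2 - e^2" "a \<le> sqrt (2 * a^2 - e^2)" "sqrt (2 * a^2 - e^2) < 2 * a - e"
proof -
  have "e^2 \<le> a^2" using assms by (intro power_mono) auto
  then show "(sqrt (2 * a^2 - e^2))^2 = 2 * a^2 - e^2"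
    using zero_le_power2[of a] by (intro real_sqrt_pow2) linarith
  show "a \<le> sqrt (2 * a^2 - e^2)" using \<open>e^2 \<le> a^2\<close> by (intro real_le_rsqrt) simp
  have "0 < 2 * (a - e)^2" using assms by simp
  then have "2 * a^2 - e^2 < (2 * a - e)^2" by (simp add: power2_eq_square algebra_simps)
  then have "sqrt (2 * a^2 - e^2) < sqrt ((2 * a - e)^2)" by (subst real_sqrt_less_iff) simp
  then show "sqrt (2 * a^2 - e^2) < 2 * a - e" using assms by simp
qed

lemma shortcut_time_bound_two_arcs:
  fixes a d :: real
  assumes "a > 0" "d > 0"
  shows "(sqrt (a^2 + d^2))^2 = a^2 + d^2" "d \<le> sqrt (a^2 + d^2)" "sqrt (a^2 + d^2) < a + d"
proof -
  show "(sqrt (a^2 + d^2))^2 = a^2 + d^2" by simp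
  show "d \<le> sqrt (a^2 + d^2)" by (intro real_le_rsqrt) simp
  have "a^2 + d^2 < (a + d)^2" using assms by (simp add: power2_eq_square algebra_simps)
  then have "sqrt (a^2 + d^2) < sqrt ((a + d)^2)" by (subst real_sqrt_less_iff) simp
  then show "sqrt (a^2 + d^2) < a + d" using assms by simp
qed

context normal_pontryagin_extremal
begin

lemma three_switches_from_lx_zero_endpoint:
  assumes z: "0 < z1" "z1 < z2" "z2 < z3" "z3 \<le> T"
    and reg: "\<And>t. t \<in> {0<..<z3} - {z1, z2} \<Longrightarrow> \<not> switch_time t"
    and lx1: "fst (lam z1) = 0" and sw: "switch_time z2" "switch_time z3"
  obtains \<sigma> where "\<sigma> \<in> {-1,1}" "z1 \<le> arc_time" "fst (\<gamma> 0) = \<sigma> * (arc_time - z1)" "z3 = z1 + 2 * arc_time"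
    "\<gamma> z3 = (- \<sigma> * arc_time, snd (\<gamma> 0) + sgn ly * (3 * arc_time^2 / 2 - (arc_time - z1)^2 / 2))"
proof -
  let ?a = arc_time
  have reg1: "\<And>t. t \<in> {0<..<z1} \<Longrightarrow> \<not> switch_time t"
    and reg2: "\<And>t. t \<in> {z1<..<z2} \<Longrightarrow> \<not> switch_time t"
    and reg3: "\<And>t. t \<in> {z2<..<z3} \<Longrightarrow> \<not> switch_time t"
    using reg z by auto
  have le: "0 \<le> (0::real)" "0 \<le> z1" "0 \<le> z2" "z1 \<le> T" "z2 \<le> T" using z by auto
  obtain \<sigma>1 where \<sigma>1: "\<sigma>1 \<in> {-1,1}" and short: "z1 \<le> ?a" and x0: "fst (\<gamma> 0) = \<sigma>1 * (?a - z1)"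
    and x1: "fst (\<gamma> z1) = \<sigma>1 * ?a"
    and y1: "snd (\<gamma> z1) = snd (\<gamma> 0) + sgn ly * \<sigma>1 * (fst (\<gamma> 0) * z1 + \<sigma>1 * z1^2 / 2)"
    by (rule arc_to_lx_zero[OF le(1) z(1) le(4) reg1 lx1, unfolded diff_zero])
  obtain \<sigma>2 where \<sigma>2: "\<sigma>2 \<in> {-1,1}" and z2: "z2 = z1 + ?a" and x1': "fst (\<gamma> z1) = - \<sigma>2 * ?a"
    and x2: "fst (\<gamma> z2) = 0" and lx2: "fst (lam z2) = \<sigma>2 * K"
    and y2: "snd (\<gamma> z2) = snd (\<gamma> z1) + sgn ly * ?a^2 / 2"
    by (rule arc_from_lx_zero_to_switch[OF le(2) z(2) le(5) reg2 lx1 sw(1)])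
  obtain \<sigma>3 where \<sigma>3: "\<sigma>3 \<in> {-1,1}" and z3: "z3 = z2 + ?a" and lx2': "fst (lam z2) = \<sigma>3 * K"
    and x3: "fst (\<gamma> z3) = \<sigma>3 * ?a" and y3: "snd (\<gamma> z3) = snd (\<gamma> z2) + sgn ly * ?a^2 / 2"
    by (rule arc_from_axis_to_switch[OF le(3) z(3,4) reg3 x2 sw(2)])
  have "\<sigma>2 = - \<sigma>1" using x1 x1' arc_time_pos \<sigma>1 \<sigma>2 by auto
  moreover have "\<sigma>3 = \<sigma>2" using lx2 lx2' K_pos by simp
  ultimately have "fst (\<gamma> z3) = - \<sigma>1 * ?a" using x3 by simp
  moreover have "snd (\<gamma> z1) = snd (\<gamma> 0) + sgn ly * (\<sigma>1 * \<sigma>1) * ((?a - z1) * z1 + z1^2 / 2)"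
    using y1 x0 by (simp add: algebra_simps)
  then have "snd (\<gamma> z3) = snd (\<gamma> 0) + sgn ly * ((?a - z1) * z1 + z1^2 / 2 + ?a^2)"
    using y3 y2 \<sigma>1 by (auto simp: algebra_simps)
  moreover have "(?a - z1) * z1 + z1^2 / 2 + ?a^2 = 3 * ?a^2 / 2 - (?a - z1)^2 / 2"
    by (simp add: power2_eq_square field_simps)
  ultimately show thesis using that[OF \<sigma>1 short x0] z2 z3 by (simp add: prod_eq_iff)
qed

text \<open>The competitor moves with \<open>u\<^sub>1 = -\<sigma>\<close> for time \<open>e + Q\<close> and then with \<open>u\<^sub>1 = \<sigma>\<close> for time \<open>Q - a\<close>,
  where \<open>a\<close> is the arc time; \<open>Q\<close> is chosen so that it gains the same height as \<open>\<gamma>\<close>.\<close>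

lemma three_switches_from_lx_zero_not_time_minimizer:
  assumes adm: "admissible T \<gamma> u" and z: "0 < z1" "z1 < z2" "z2 < z3" "z3 \<le> T"
    and reg: "\<And>t. t \<in> {0<..<z3} - {z1, z2} \<Longrightarrow> \<not> switch_time t"
    and lx1: "fst (lam z1) = 0" and sw: "switch_time z2" "switch_time z3"
  shows "\<not> time_minimizer T \<gamma>"
proof -
  let ?a = arc_time
  obtain \<sigma> where \<sigma>: "\<sigma> \<in> {-1,1}" and short: "z1 \<le> ?a" and x0: "fst (\<gamma> 0) = \<sigma> * (?a - z1)"
    and z3: "z3 = z1 + 2 * ?a"
    and end3: "\<gamma> z3 = (- \<sigma> * ?a, snd (\<gamma> 0) + sgn ly * (3 * ?a^2 / 2 - (?a - z1)^2 / 2))"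
    using three_switches_from_lx_zero_endpoint[OF z reg lx1 sw] by blast
  define e where "e = ?a - z1"
  have e: "0 \<le> e" "e < ?a" using short z by (auto simp: e_def)
  define Q where "Q = sqrt (2 * ?a^2 - e^2)"
  note Q = shortcut_time_bound_three_arcs[OF e, folded Q_def]
  have m\<sigma>: "- \<sigma> \<in> {-1,1}" using \<sigma> by auto
  show ?thesis
  proof (rule two_leg_shortcut_not_time_minimizer[OF m\<sigma> _ _ _ adm _ z(4)])
    show "\<bar>sgn ly\<bar> \<le> 1" "0 \<le> e + Q" "0 \<le> Q - ?a" "0 \<le> z3" "e + Q + (Q - ?a) < z3"
      using e Q z z3 by (auto simp: e_def sgn_real_def)
    show "\<gamma> 0 = (fst (\<gamma> 0), snd (\<gamma> 0))" by simp
    have x: "fst (\<gamma> 0) + - \<sigma> * (e + Q) = - \<sigma> * Q" "fst (\<gamma> 0) + - \<sigma> * (e + Q - (Q - ?a)) = - \<sigma> * ?a"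
      using x0 by (simp_all add: e_def algebra_simps)
    have "half_signed_square (- \<sigma> * Q) = - \<sigma> * Q^2 / 2" "half_signed_square (fst (\<gamma> 0)) = \<sigma> * e^2 / 2"
        "half_signed_square (- \<sigma> * ?a) = - \<sigma> * ?a^2 / 2"
      using half_signed_square_sgn_mult[OF m\<sigma>] half_signed_square_sgn_mult[OF \<sigma>] Q e x0 arc_time_pos
      by (auto simp: e_def)
    then have "3 * ?a^2 / 2 - e^2 / 2 = - \<sigma> * (2 * half_signed_square (- \<sigma> * Q)
        - half_signed_square (fst (\<gamma> 0)) - half_signed_square (- \<sigma> * ?a))"
      unfolding Q(1) using \<sigma> by (auto simp: field_simps)
    with end3 x show "\<gamma> z3 = (fst (\<gamma> 0) + - \<sigma> * (e + Q - (Q - ?a)),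
        snd (\<gamma> 0) + sgn ly * - \<sigma> * (2 * half_signed_square (fst (\<gamma> 0) + - \<sigma> * (e + Q))
          - half_signed_square (fst (\<gamma> 0)) - half_signed_square (fst (\<gamma> 0) + - \<sigma> * (e + Q - (Q - ?a)))))"
      by (simp add: e_def)
  qed
qed

lemma three_switches_from_axis_endpoint:
  assumes z: "0 < z1" "z1 < z2" "z2 < z3" "z3 \<le> T"
    and reg: "\<And>t. t \<in> {0<..<z3} - {z1, z2} \<Longrightarrow> \<not> switch_time t"
    and x1: "fst (\<gamma> z1) = 0" and sw: "switch_time z2" "switch_time z3"
  obtains \<sigma> where "\<sigma> \<in> {-1,1}" "fst (\<gamma> 0) = - \<sigma> * z1" "z3 = z1 + 2 * arc_time"
    "\<gamma> z3 = (0, snd (\<gamma> 0) + sgn ly * (arc_time^2 + z1^2 / 2))"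
proof -
  let ?a = arc_time
  have reg1: "\<And>t. t \<in> {0<..<z1} \<Longrightarrow> \<not> switch_time t"
    and reg2: "\<And>t. t \<in> {z1<..<z2} \<Longrightarrow> \<not> switch_time t"
    and reg3: "\<And>t. t \<in> {z2<..<z3} \<Longrightarrow> \<not> switch_time t"
    using reg z by auto
  have le: "0 \<le> (0::real)" "0 \<le> z1" "0 \<le> z2" "z1 \<le> T" "z2 \<le> T" using z by auto
  obtain \<sigma>1 where \<sigma>1: "\<sigma>1 \<in> {-1,1}" and x0: "fst (\<gamma> 0) = - \<sigma>1 * z1"
    and "fst (lam z1) = \<sigma>1 * K" and y1: "snd (\<gamma> z1) = snd (\<gamma> 0) + sgn ly * z1^2 / 2"
    by (rule arc_to_axis[OF le(1) z(1) le(4) reg1 x1, unfolded diff_zero])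
  obtain \<sigma>2 where "\<sigma>2 \<in> {-1,1}" and z2: "z2 = z1 + ?a" and "fst (lam z1) = \<sigma>2 * K"
    and lx2: "fst (lam z2) = 0" and "fst (\<gamma> z2) = \<sigma>2 * ?a" and y2: "snd (\<gamma> z2) = snd (\<gamma> z1) + sgn ly * ?a^2 / 2"
    by (rule arc_from_axis_to_switch[OF le(2) z(2) le(5) reg2 x1 sw(1)])
  obtain \<sigma>3 where "\<sigma>3 \<in> {-1,1}" and z3: "z3 = z2 + ?a" and "fst (\<gamma> z2) = - \<sigma>3 * ?a"
    and x3: "fst (\<gamma> z3) = 0" and "fst (lam z3) = \<sigma>3 * K" and y3: "snd (\<gamma> z3) = snd (\<gamma> z2) + sgn ly * ?a^2 / 2"
    by (rule arc_from_lx_zero_to_switch[OF le(3) z(3,4) reg3 lx2 sw(2)])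
  have "snd (\<gamma> z3) = snd (\<gamma> 0) + sgn ly * (?a^2 + z1^2 / 2)"
    using y3 y2 y1 by (simp add: field_simps)
  with that[OF \<sigma>1 x0] z2 z3 x3 show thesis by (simp add: prod_eq_iff)
qed

lemma three_switches_from_axis_not_time_minimizer:
  assumes adm: "admissible T \<gamma> u" and z: "0 < z1" "z1 < z2" "z2 < z3" "z3 \<le> T"
    and reg: "\<And>t. t \<in> {0<..<z3} - {z1, z2} \<Longrightarrow> \<not> switch_time t"
    and x1: "fst (\<gamma> z1) = 0" and sw: "switch_time z2" "switch_time z3"
  shows "\<not> time_minimizer T \<gamma>"
proof -
  let ?a = arc_time
  obtain \<sigma> where \<sigma>: "\<sigma> \<in> {-1,1}" and x0: "fst (\<gamma> 0) = - \<sigma> * z1" and z3: "z3 = z1 + 2 * ?a"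
    and end3: "\<gamma> z3 = (0, snd (\<gamma> 0) + sgn ly * (?a^2 + z1^2 / 2))"
    using three_switches_from_axis_endpoint[OF z reg x1 sw] by blast
  define Q where "Q = sqrt (?a^2 + z1^2)"
  note Q = shortcut_time_bound_two_arcs[OF arc_time_pos z(1), folded Q_def]
  have m\<sigma>: "- \<sigma> \<in> {-1,1}" using \<sigma> by auto
  show ?thesis
  proof (rule two_leg_shortcut_not_time_minimizer[OF m\<sigma> _ _ _ adm _ z(4)])
    show "\<bar>sgn ly\<bar> \<le> 1" "0 \<le> Q - z1" "0 \<le> Q" "0 \<le> z3" "Q - z1 + Q < z3"
      using Q z z3 by (auto simp: sgn_real_def)
    show "\<gamma> 0 = (fst (\<gamma> 0), snd (\<gamma> 0))" by simp
    have x: "fst (\<gamma> 0) + - \<sigma> * (Q - z1) = - \<sigma> * Q" "fst (\<gamma> 0) + - \<sigma> * (Q - z1 - Q) = 0"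
      using x0 by (simp_all add: algebra_simps)
    have "half_signed_square (- \<sigma> * Q) = - \<sigma> * Q^2 / 2" "half_signed_square (fst (\<gamma> 0)) = - \<sigma> * z1^2 / 2"
        "half_signed_square 0 = 0"
      using half_signed_square_sgn_mult[OF m\<sigma>, of Q] half_signed_square_sgn_mult[OF m\<sigma>, of z1] Q z x0
      by (auto simp: half_signed_square_def)
    then have "?a^2 + z1^2 / 2 = - \<sigma> * (2 * half_signed_square (- \<sigma> * Q)
        - half_signed_square (fst (\<gamma> 0)) - half_signed_square 0)"
      unfolding Q(1) using \<sigma> by (auto simp: field_simps)
    with end3 x show "\<gamma> z3 = (fst (\<gamma> 0) + - \<sigma> * (Q - z1 - Q),
        snd (\<gamma> 0) + sgn ly * - \<sigma> * (2 * half_signed_square (fst (\<gamma> 0) + - \<sigma> * (Q - z1))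
          - half_signed_square (fst (\<gamma> 0)) - half_signed_square (fst (\<gamma> 0) + - \<sigma> * (Q - z1 - Q))))"
      by simp
  qed
qed

lemma axis_start_two_switches_endpoint:
  assumes z: "0 < z1" "z1 < z2" "z2 < w" "w \<le> T"
    and reg: "\<And>t. t \<in> {0<..<w} - {z1, z2} \<Longrightarrow> \<not> switch_time t"
    and x0: "fst (\<gamma> 0) = 0" and sw: "switch_time z1" "switch_time z2"
  obtains \<sigma> where "\<sigma> \<in> {-1,1}" "z2 = 2 * arc_time"
    "\<gamma> w = (- \<sigma> * (w - z2), snd (\<gamma> 0) + sgn ly * (arc_time^2 + (w - z2)^2 / 2))"
proof -
  let ?a = arc_time
  have reg1: "\<And>t. t \<in> {0<..<z1} \<Longrightarrow> \<not> switch_time t"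
    and reg2: "\<And>t. t \<in> {z1<..<z2} \<Longrightarrow> \<not> switch_time t"
    and reg3: "\<And>t. t \<in> {z2<..<w} \<Longrightarrow> \<not> switch_time t"
    using reg z by auto
  have le: "0 \<le> (0::real)" "0 \<le> z1" "0 \<le> z2" "z1 \<le> T" "z2 \<le> T" using z by auto
  obtain \<sigma>1 where \<sigma>1: "\<sigma>1 \<in> {-1,1}" and z1: "z1 = ?a" and lx1: "fst (lam z1) = 0"
    and x1: "fst (\<gamma> z1) = \<sigma>1 * ?a" and y1: "snd (\<gamma> z1) = snd (\<gamma> 0) + sgn ly * ?a^2 / 2"
    by (rule arc_from_axis_to_switch[OF le(1) z(1) le(4) reg1 x0 sw(1), unfolded add_0])
  obtain \<sigma>2 where \<sigma>2: "\<sigma>2 \<in> {-1,1}" and z2: "z2 = z1 + ?a" and x1': "fst (\<gamma> z1) = - \<sigma>2 * ?a"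
    and x2: "fst (\<gamma> z2) = 0" and lx2: "fst (lam z2) = \<sigma>2 * K"
    and y2: "snd (\<gamma> z2) = snd (\<gamma> z1) + sgn ly * ?a^2 / 2"
    by (rule arc_from_lx_zero_to_switch[OF le(2) z(2) le(5) reg2 lx1 sw(2)])
  obtain \<sigma>3 where "\<sigma>3 \<in> {-1,1}" and lx2': "fst (lam z2) = \<sigma>3 * K" and x3: "fst (\<gamma> w) = \<sigma>3 * (w - z2)"
    and "fst (lam w) = \<sigma>3 * (K - \<bar>ly\<bar> * (w - z2))"
    and y3: "snd (\<gamma> w) = snd (\<gamma> z2) + sgn ly * (w - z2)^2 / 2"
    by (rule arc_from_axis[OF le(3) z(3,4) reg3 x2])
  have "\<sigma>2 = - \<sigma>1" using x1 x1' arc_time_pos \<sigma>1 \<sigma>2 by auto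
  moreover have "\<sigma>3 = \<sigma>2" using lx2 lx2' K_pos by simp
  moreover have "snd (\<gamma> w) = snd (\<gamma> 0) + sgn ly * (?a^2 + (w - z2)^2 / 2)"
    using y3 y2 y1 by (simp add: field_simps)
  ultimately show thesis using that[OF \<sigma>1] z1 z2 x3 by (simp add: prod_eq_iff)
qed

lemma axis_start_two_switches_not_time_minimizer:
  assumes adm: "admissible T \<gamma> u" and z: "0 < z1" "z1 < z2" "z2 < w" "w \<le> T"
    and reg: "\<And>t. t \<in> {0<..<w} - {z1, z2} \<Longrightarrow> \<not> switch_time t"
    and x0: "fst (\<gamma> 0) = 0" and sw: "switch_time z1" "switch_time z2"
  shows "\<not> time_minimizer T \<gamma>"
proof -
  let ?a = arc_time
  obtain \<sigma> where \<sigma>: "\<sigma> \<in> {-1,1}" and z2: "z2 = 2 * ?a"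
    and endw: "\<gamma> w = (- \<sigma> * (w - z2), snd (\<gamma> 0) + sgn ly * (?a^2 + (w - z2)^2 / 2))"
    using axis_start_two_switches_endpoint[OF z reg x0 sw] by blast
  define d where "d = w - z2"
  have d: "0 < d" using z by (simp add: d_def)
  define Q where "Q = sqrt (?a^2 + d^2)"
  note Q = shortcut_time_bound_two_arcs[OF arc_time_pos d, folded Q_def]
  have m\<sigma>: "- \<sigma> \<in> {-1,1}" using \<sigma> by auto
  show ?thesis
  proof (rule two_leg_shortcut_not_time_minimizer[OF m\<sigma> _ _ _ adm _ z(4)])
    show "\<bar>sgn ly\<bar> \<le> 1" "0 \<le> Q" "0 \<le> Q - d" "0 \<le> w" "Q + (Q - d) < w"
      using Q z z2 d by (auto simp: d_def sgn_real_def)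
    show "\<gamma> 0 = (fst (\<gamma> 0), snd (\<gamma> 0))" by simp
    have x: "fst (\<gamma> 0) + - \<sigma> * Q = - \<sigma> * Q" "fst (\<gamma> 0) + - \<sigma> * (Q - (Q - d)) = - \<sigma> * d"
      using x0 by simp_all
    have "half_signed_square (- \<sigma> * Q) = - \<sigma> * Q^2 / 2" "half_signed_square (- \<sigma> * d) = - \<sigma> * d^2 / 2"
        "half_signed_square (fst (\<gamma> 0)) = 0"
      using half_signed_square_sgn_mult[OF m\<sigma>, of Q] half_signed_square_sgn_mult[OF m\<sigma>, of d] Q d x0
      by (auto simp: half_signed_square_def)
    then have "?a^2 + d^2 / 2 = - \<sigma> * (2 * half_signed_square (- \<sigma> * Q)
        - half_signed_square (fst (\<gamma> 0)) - half_signed_square (- \<sigma> * d))"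
      unfolding Q(1) using \<sigma> by (auto simp: field_simps)
    with endw x show "\<gamma> w = (fst (\<gamma> 0) + - \<sigma> * (Q - (Q - d)),
        snd (\<gamma> 0) + sgn ly * - \<sigma> * (2 * half_signed_square (fst (\<gamma> 0) + - \<sigma> * Q)
          - half_signed_square (fst (\<gamma> 0)) - half_signed_square (fst (\<gamma> 0) + - \<sigma> * (Q - (Q - d)))))"
      by (simp add: d_def)
  qed
qed

end

section \<open>Counting arcs\<close>

lemma obtain_three_least:
  fixes Z :: "'a::linorder set"
  assumes "finite Z" "card Z \<ge> 3"
  obtains z1 z2 z3 where "z1 < z2" "z2 < z3" "{z1, z2, z3} \<subseteq> Z" "Z \<inter> {..<z3} = {z1, z2}"
proof -
  have least: "Min A \<in> A" "\<And>t. t \<in> A \<Longrightarrow> Min A \<le> t" if "finite A" "A \<noteq> {}" for A :: "'a set"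
    using that by auto
  define z1 where "z1 = Min Z"
  define z2 where "z2 = Min (Z - {z1})"
  define z3 where "z3 = Min (Z - {z1, z2})"
  have ne: "Z \<noteq> {}" "Z - {z1} \<noteq> {}" "Z - {z1, z2} \<noteq> {}"
  proof -
    have "card {z1} \<le> 2" "card {z1, z2} \<le> 2" by (auto simp: card_insert_if)
    then show "Z \<noteq> {}" "Z - {z1} \<noteq> {}" "Z - {z1, z2} \<noteq> {}"
      using assms card_mono[of "{z1}" Z] card_mono[of "{z1, z2}" Z] by auto
  qed
  note l1 = least[OF assms(1) ne(1), folded z1_def]
  note l2 = least[OF _ ne(2), folded z2_def] and l3 = least[OF _ ne(3), folded z3_def]
  have mem: "z1 \<in> Z" "z2 \<in> Z - {z1}" "z3 \<in> Z - {z1, z2}"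
    using l1(1) l2(1) l3(1) assms(1) by auto
  have lt: "z1 < z2" "z2 < z3"
    using mem l1(2)[of z2] l2(2)[of z3] assms(1) by (auto simp: less_le)
  show thesis
  proof (rule that[OF lt])
    show "{z1, z2, z3} \<subseteq> Z" using mem by auto
    have "t \<in> {z1, z2}" if "t \<in> Z" "t < z3" for t
      using that l3(2)[of t] assms(1) by (auto simp: not_le[symmetric])
    then show "Z \<inter> {..<z3} = {z1, z2}" using mem lt by auto
  qed
qed

lemma inj_on_snd_arcs: "inj_on snd (arcs T lam \<gamma>)"
proof (rule inj_onI)
  fix I J assume I: "I \<in> arcs T lam \<gamma>" and J: "J \<in> arcs T lam \<gamma>" and "snd I = snd J"
  then have "{fst J<..<snd J} \<subseteq> {fst I<..<snd I} \<or> {fst I<..<snd I} \<subseteq> {fst J<..<snd J}"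
    by (cases "fst I \<le> fst J") auto
  with I J show "I = J" unfolding arcs_def by blast
qed

context normal_pontryagin_extremal
begin

lemma regular_interval_iff:
  "regular_interval T lam \<gamma> I \<longleftrightarrow>
    0 \<le> fst I \<and> fst I < snd I \<and> snd I \<le> T \<and> (\<forall>t\<in>{fst I<..<snd I}. \<not> switch_time t)"
proof -
  have "snd (lam t) = ly" if "t \<in> {fst I<..<snd I}" "0 \<le> fst I" "snd I \<le> T" for t
    using that by (intro lam_y_const) auto
  then show ?thesis
    unfolding regular_interval_def switch_time_def using ly_nonzero
    by (auto simp: switching_def Xf_def X1_def X2_def inner_prod_def)
qed

lemma arc_right_end:
  assumes "I \<in> arcs T lam \<gamma>"
  shows "snd I = T \<or> snd I \<in> {0<..<T} \<and> switch_time (snd I)"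
proof (rule ccontr)
  let ?b = "snd I"
  assume "\<not> ?thesis"
  moreover have I: "0 \<le> fst I" "fst I < ?b" "?b \<le> T" "\<And>t. t \<in> {fst I<..<?b} \<Longrightarrow> \<not> switch_time t"
    and max: "\<And>J. regular_interval T lam \<gamma> J \<Longrightarrow> {fst I<..<?b} \<subseteq> {fst J<..<snd J} \<Longrightarrow> J = I"
    using assms unfolding arcs_def regular_interval_iff by blast+
  ultimately have b: "?b < T" "?b \<in> {0..T}" "fst (lam ?b) \<noteq> 0" "fst (\<gamma> ?b) \<noteq> 0"
    by (auto simp: switch_time_def)
  obtain d1 where "d1 > 0" and d1: "\<And>t. t \<in> {0..T} \<Longrightarrow> dist t ?b < d1 \<Longrightarrow> fst (lam t) \<noteq> 0"
    using continuous_lx b unfolding continuous_on_iff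
    by (metis dist_commute dist_real_def zero_less_abs_iff abs_minus_commute order_less_irrefl diff_0_right)
  obtain d2 where "d2 > 0" and d2: "\<And>t. t \<in> {0..T} \<Longrightarrow> dist t ?b < d2 \<Longrightarrow> fst (\<gamma> t) \<noteq> 0"
    using continuous_x b unfolding continuous_on_iff
    by (metis dist_commute dist_real_def zero_less_abs_iff abs_minus_commute order_less_irrefl diff_0_right)
  define J where "J = (fst I, min T (?b + min d1 d2 / 2))"
  have "regular_interval T lam \<gamma> J"
    unfolding regular_interval_iff
  proof (intro conjI ballI)
    fix t assume t: "t \<in> {fst J<..<snd J}"
    show "\<not> switch_time t"
    proof (cases "t < ?b")
      case False
      then have "t \<in> {0..T}" "dist t ?b < d1" "dist t ?b < d2"
        using t I \<open>d1 > 0\<close> \<open>d2 > 0\<close> by (auto simp: J_def dist_real_def)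
      then show ?thesis using d1 d2 by (auto simp: switch_time_def)
    qed (use t I in \<open>auto simp: J_def\<close>)
  qed (use I b \<open>d1 > 0\<close> \<open>d2 > 0\<close> in \<open>auto simp: J_def\<close>)
  moreover have "{fst I<..<?b} \<subseteq> {fst J<..<snd J}" using b \<open>d1 > 0\<close> \<open>d2 > 0\<close> by (auto simp: J_def)
  ultimately have "J = I" by (rule max)
  then show False using b \<open>d1 > 0\<close> \<open>d2 > 0\<close> by (auto simp: J_def prod_eq_iff)
qed

lemma card_arcs_le:
  assumes "finite {t\<in>{0<..<T}. switch_time t}"
  shows "card (arcs T lam \<gamma>) \<le> card {t\<in>{0<..<T}. switch_time t} + 1"
proof -
  have "card (arcs T lam \<gamma>) = card (snd ` arcs T lam \<gamma>)" using card_image[OF inj_on_snd_arcs] by simp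
  also have "\<dots> \<le> card (insert T {t\<in>{0<..<T}. switch_time t})"
    using arc_right_end assms by (intro card_mono) auto
  also have "\<dots> \<le> card {t\<in>{0<..<T}. switch_time t} + 1" using assms by (simp add: card_insert_if)
  finally show ?thesis .
qed

lemma three_switches_not_time_minimizer:
  assumes adm: "admissible T \<gamma> u" and fin: "finite {t\<in>{0<..<T}. switch_time t}"
    and card: "card {t\<in>{0<..<T}. switch_time t} \<ge> 3"
  shows "\<not> time_minimizer T \<gamma>"
proof -
  obtain z1 z2 z3 where z: "z1 < z2" "z2 < z3" "{z1, z2, z3} \<subseteq> {t\<in>{0<..<T}. switch_time t}"
    and least: "{t\<in>{0<..<T}. switch_time t} \<inter> {..<z3} = {z1, z2}"
    using obtain_three_least[OF fin card] by blast
  have bounds: "0 < z1" "z3 \<le> T" and sw: "switch_time z1" "switch_time z2" "switch_time z3"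
    using z by auto
  have reg: "\<not> switch_time t" if t: "t \<in> {0<..<z3} - {z1, z2}" for t
  proof
    assume "switch_time t"
    with t bounds have "t \<in> {t\<in>{0<..<T}. switch_time t} \<inter> {..<z3}" by auto
    with least t show False by blast
  qed
  show ?thesis
  proof (cases "fst (lam z1) = 0")
    case True
    show ?thesis
      by (rule three_switches_from_lx_zero_not_time_minimizer[OF adm bounds(1) z(1,2) bounds(2) reg True sw(2,3)])
  next
    case False
    with sw(1) have x1: "fst (\<gamma> z1) = 0" by (simp add: switch_time_def)
    show ?thesis
      by (rule three_switches_from_axis_not_time_minimizer[OF adm bounds(1) z(1,2) bounds(2) reg x1 sw(2,3)])
  qed
qed

lemma axis_start_not_time_minimizer:
  assumes adm: "admissible T \<gamma> u" and fin: "finite {t\<in>{0<..<T}. switch_time t}"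
    and card: "card {t\<in>{0<..<T}. switch_time t} \<ge> 2" and x0: "fst (\<gamma> 0) = 0"
  shows "\<not> time_minimizer T \<gamma>"
proof -
  have "card (insert T {t\<in>{0<..<T}. switch_time t}) \<ge> 3" using fin card by simp
  then obtain z1 z2 w where z: "z1 < z2" "z2 < w" "{z1, z2, w} \<subseteq> insert T {t\<in>{0<..<T}. switch_time t}"
    and least: "insert T {t\<in>{0<..<T}. switch_time t} \<inter> {..<w} = {z1, z2}"
    using obtain_three_least[of "insert T {t\<in>{0<..<T}. switch_time t}"] fin by blast
  have bounds: "0 < z1" "w \<le> T" and sw: "switch_time z1" "switch_time z2"
    using z by auto
  have reg: "\<not> switch_time t" if t: "t \<in> {0<..<w} - {z1, z2}" for t
  proof
    assume "switch_time t"
    with t bounds have "t \<in> {t\<in>{0<..<T}. switch_time t} \<inter> {..<w}" by auto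
    with least t show False by blast
  qed
  show ?thesis
    by (rule axis_start_two_switches_not_time_minimizer[OF adm bounds(1) z(1,2) bounds(2) reg x0 sw])
qed

end

lemma regular_bang_bang_three_arcs_not_time_minimizer:
  assumes rbb: "regular_bang_bang_lift T lam \<gamma> u" and three: "card (arcs T lam \<gamma>) \<ge> 3"
  shows "card (arcs T lam \<gamma>) > 3 \<Longrightarrow> \<not> time_minimizer T \<gamma>"
    and "fst (\<gamma> 0) = 0 \<Longrightarrow> \<not> time_minimizer T \<gamma>"
proof -
  have ext: "extremal_pair T lam \<gamma> u" and adm: "admissible T \<gamma> u"
    using rbb by (auto simp: regular_bang_bang_lift_def extremal_pair_def)
  obtain F where "finite F" and cover: "{0..T} - F = (\<Union>I\<in>arcs T lam \<gamma>. {fst I<..<snd I})"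
    using rbb by (auto simp: regular_bang_bang_lift_def)
  obtain K N where "K \<ge> 0" "negligible N" "\<And>t. t \<in> {0..T} - N \<Longrightarrow> pontryagin_at T lam \<gamma> u K t"
    using extremal_pair_pontryagin_ae[OF ext] by blast
  moreover have "arcs T lam \<gamma> \<noteq> {}" using three by auto
  then obtain I where "I \<in> arcs T lam \<gamma>" by blast
  then have I: "regular_interval T lam \<gamma> I" by (simp add: arcs_def)
  define t0 where "t0 = (fst I + snd I) / 2"
  have t0: "t0 \<in> {0..T}" "fst (lam t0) \<noteq> 0" "snd (lam t0) * fst (\<gamma> t0) \<noteq> 0"
    using I by (auto simp: t0_def regular_interval_def switching_def Xf_def X1_def X2_def inner_prod_def)
  ultimately interpret pontryagin_extremal T K lam \<gamma> u N
    using adm ext I by unfold_locales (auto simp: admissible_def extremal_pair_def regular_interval_def)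
  have "ly \<noteq> 0" using t0 lam_y_const by auto
  moreover have "K > 0" using hamiltonian_const[OF t0(1)] t0(2)
    by (metis add_pos_nonneg abs_ge_zero mult_nonneg_nonneg zero_less_abs_iff)
  ultimately interpret normal_pontryagin_extremal T K lam \<gamma> u N by unfold_locales
  let ?Z = "{t\<in>{0<..<T}. switch_time t}"
  have "?Z \<subseteq> F"
  proof
    fix t assume t: "t \<in> ?Z"
    show "t \<in> F"
    proof (rule ccontr)
      assume "t \<notin> F"
      with t have "t \<in> {0..T} - F" by auto
      with cover obtain J where "J \<in> arcs T lam \<gamma>" "t \<in> {fst J<..<snd J}" by blast
      with t show False unfolding arcs_def regular_interval_iff by blast
    qed
  qed
  then have fin: "finite ?Z" using \<open>finite F\<close> by (rule finite_subset)
  note card_arcs = card_arcs_le[OF fin]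
  show "card (arcs T lam \<gamma>) > 3 \<Longrightarrow> \<not> time_minimizer T \<gamma>"
    using three_switches_not_time_minimizer[OF adm fin] card_arcs by simp
  show "fst (\<gamma> 0) = 0 \<Longrightarrow> \<not> time_minimizer T \<gamma>"
    using axis_start_not_time_minimizer[OF adm fin] card_arcs three by simp
qed

theorem mainTheorem11:
  shows "(\<forall>T lam \<gamma> u. regular_bang_bang_lift T lam \<gamma> u \<and> card (arcs T lam \<gamma>) > 3
            \<longrightarrow> \<not> time_minimizer T \<gamma>) \<and>
         (\<forall>T lam \<gamma> u. regular_bang_bang_lift T lam \<gamma> u \<and> fst (\<gamma> 0) = 0 \<and> time_minimizer T \<gamma>
            \<longrightarrow> card (arcs T lam \<gamma>) \<le> 2)"
proof (intro conjI allI impI)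
  fix T lam \<gamma> u
  assume "regular_bang_bang_lift T lam \<gamma> u \<and> card (arcs T lam \<gamma>) > 3"
  then show "\<not> time_minimizer T \<gamma>"
    using regular_bang_bang_three_arcs_not_time_minimizer(1)[of T lam \<gamma> u] by simp
next
  fix T lam \<gamma> u
  assume h: "regular_bang_bang_lift T lam \<gamma> u \<and> fst (\<gamma> 0) = 0 \<and> time_minimizer T \<gamma>"
  show "card (arcs T lam \<gamma>) \<le> 2"
  proof (rule ccontr)
    assume "\<not> card (arcs T lam \<gamma>) \<le> 2"
    with h show False using regular_bang_bang_three_arcs_not_time_minimizer(2)[of T lam \<gamma> u] by simp
  qed
qed

end
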